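(* Let $\Lambda\subset\mathbb{C}$ be a lattice, $p,q\ge2$ integers, $z_0\in\mathbb{C}$, $r\ge2$, and $U(z)=\exp(\zeta(pqz-z_0,\Lambda)N_r)$. Let $A\in GL_r(K_\Lambda)$ and let $T$ be an $r\times r$ matrix of entire functions whose inverse is also a matrix of entire functions, such that $U(z/p)T(z)=A(z)U(z)$. Write in block form $$T=\begin{pmatrix}T'&\beta\\ \gamma&\delta\end{pmatrix},\qquad A=\begin{pmatrix}A'&b\\ c&d\end{pmatrix},$$ with $T',A'$ of size $(r-1)\times(r-1)$, $\gamma,c$ row vectors of length $r-1$ and $\delta,d$ scalar functions. Then $\gamma=c=0$ and $\delta=d$ is a constant.
   Context: $K_\Lambda$ is the field of $\Lambda$-periodic meromorphic functions on $\mathbb{C}$. $\zeta(z,\Lambda)$ is the Weierstrass zeta function (logarithmic derivative of the Weierstrass sigma function; simple poles of residue $1$ exactly at $\Lambda$). $N_r$ is the $r\times r$ matrix with $1$ at positions $(i,i+1)$ and $0$ elsewhere. *)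

theory Defs
  imports "HOL-Complex_Analysis.Complex_Analysis" "Jordan_Normal_Form.Determinant"
begin

definition is_lattice_basis :: "complex \<Rightarrow> complex \<Rightarrow> bool" where
  "is_lattice_basis w1 w2 \<longleftrightarrow> w1 \<noteq> 0 \<and> Im (w2 / w1) \<noteq> 0"

definition lattice :: "complex \<Rightarrow> complex \<Rightarrow> complex set" where
  "lattice w1 w2 = {of_int m * w1 + of_int n * w2 | m n. True}"

text \<open>Weierstrass zeta function of a lattice L (meaningful for z not in L,
  where the defining series converges absolutely).\<close>
definition weierstrass_zeta :: "complex set \<Rightarrow> complex \<Rightarrow> complex" where
  "weierstrass_zeta L z =
     1 / z + (\<Sum>\<^sub>\<infinity> w \<in> L - {0}. 1 / (z - w) + 1 / w + z / w\<^sup>2)"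

definition Nmat :: "nat \<Rightarrow> complex mat" where
  "Nmat r = mat r r (\<lambda>(i,j). if j = i + 1 then 1 else 0)"

text \<open>Matrix exponential of a nilpotent square matrix M of size n
  (M^n = 0), i.e. the exponential series, which terminates.\<close>
definition exp_nilp :: "complex mat \<Rightarrow> complex mat" where
  "exp_nilp M = foldr (\<lambda>k acc. (1 / of_nat (fact k)) \<cdot>\<^sub>m (M ^\<^sub>m k) + acc)
                  [0..<dim_row M] (0\<^sub>m (dim_row M) (dim_row M))"

text \<open>Lambda-periodic meromorphic function (element of K_Lambda), represented
  by its canonical ("nice") representative: value 0 at poles, continuous elsewhere.\<close>
definition elliptic_fun :: "complex set \<Rightarrow> (complex \<Rightarrow> complex) \<Rightarrow> bool" where
  "elliptic_fun L f \<longleftrightarrow> f nicely_meromorphic_on UNIV \<and> (\<forall>w\<in>L. \<forall>z. f (z + w) = f z)"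

end

theory Submission
  imports Defs
begin

text \<open>Write \<open>t\<^sub>j\<close> and \<open>a\<^sub>j\<close> for the entries of the last rows of \<open>T\<close> and \<open>A\<close>. As \<open>U\<close>
  is unipotent upper triangular with entries \<open>\<zeta>\<^sup>k/k!\<close>, comparing last rows gives
  \<open>t\<^sub>j = \<Sum>\<^sub>l\<^sub>\<le>\<^sub>j a\<^sub>l \<zeta>(pqz - z\<^sub>0)\<^bsup>j-l\<^esup>/(j-l)!\<close>. Inductively \<open>t\<^sub>j = a\<^sub>j\<close> is entire and
  elliptic, hence a constant \<open>c\<close>, and the next row gives \<open>t\<^sub>j\<^sub>+\<^sub>1 = a\<^sub>j\<^sub>+\<^sub>1 + c \<zeta>(pqz - z\<^sub>0)\<close>.

  This forces \<open>c = 0\<close>. Otherwise, after an affine change of variables, \<open>\<zeta> - e\<close> would be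
  \<open>pq\<Lambda>\<close>-periodic for an entire \<open>e\<close>. Then \<open>e''\<close> is doubly periodic, hence constant, and since
  \<open>\<zeta>''\<close> is \<open>\<Lambda>\<close>-periodic, \<open>\<zeta> - e\<close> is in fact \<open>\<Lambda>\<close>-periodic. The even part of \<open>e\<close> is then
  constant, so up to a constant \<open>\<zeta> - e\<close> is an odd elliptic function whose only poles are simple
  poles at the lattice points. No such function \<open>F\<close> exists: \<open>F w * F (w - w1/2)\<close> is entire,
  because each pole of one factor meets a zero of the other at a half period, hence constant,
  and it vanishes at \<open>w2/2\<close>; so \<open>F (w - w1/2)\<close> vanishes near the pole of \<open>F\<close> at \<open>0\<close>.\<close>

lemma eventually_at_affine:
  fixes a b z :: complex
  assumes "a \<noteq> 0" and "\<forall>\<^sub>F w in at (a * z + b). P w"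
  shows "\<forall>\<^sub>F w in at z. P (a * w + b)"
proof -
  have "filterlim (\<lambda>w. a * w + b) (at (a * z + b)) (at z)"
    using eventually_neq_at_within[of z z UNIV] assms(1)
    by (intro filterlim_atI) (auto intro!: tendsto_eq_intros elim!: eventually_mono)
  with assms(2) show ?thesis
    by (rule eventually_compose_filterlim)
qed

lemma eventually_cosparse_affine:
  fixes a b :: complex
  assumes "a \<noteq> 0" and "\<forall>\<^sub>\<approx>w. P w"
  shows "\<forall>\<^sub>\<approx>w. P (a * w + b)"
  using assms eventually_at_affine eventually_cosparse_imp_eventually_at[OF assms(2)]
  by (simp add: eventually_cosparse_open_eq)

lemma open_Collect_if_cosparse: "\<forall>\<^sub>\<approx>z. P z \<Longrightarrow> open {z. P z}"
  using sparse_in_UNIV_imp_closed[of "{z. \<not> P z}"]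
  by (simp add: eventually_cosparse open_closed Compl_eq)

lemma eq_if_eventually_cosparse:
  fixes f g :: "complex \<Rightarrow> complex"
  assumes "isCont f z" "isCont g z" "\<forall>\<^sub>\<approx>w. f w = g w"
  shows "f z = g z"
  using at_within_isCont_imp_nhds[OF eventually_cosparse_imp_eventually_at[OF assms(3)] assms(1,2)]
  by (auto dest: eventually_nhds_x_imp_x)

lemma periodic_if_eventually_cosparse:
  fixes f :: "complex \<Rightarrow> complex"
  assumes "continuous_on UNIV f" "\<forall>\<^sub>\<approx>w. f (w + l) = f w"
  shows "f (z + l) = f z"
proof (rule eq_if_eventually_cosparse[OF _ _ assms(2)])
  have "continuous_on UNIV (\<lambda>w. f (w + l))"
    by (intro continuous_on_compose2[OF assms(1)] continuous_intros) auto
  then show "isCont (\<lambda>w. f (w + l)) z" "isCont f z"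
    using assms(1) by (simp_all add: continuous_on_eq_continuous_at)
qed

lemma eventually_zero_if_shifted_product_zero:
  fixes F :: "complex \<Rightarrow> complex"
  assumes "\<forall>\<^sub>\<approx>w. F w * F (w - \<omega>) = 0" and "\<forall>\<^sub>F w in at \<xi>. F w \<noteq> 0"
  shows "\<forall>\<^sub>F u in at (\<xi> - \<omega>). F u = 0"
proof -
  have "\<forall>\<^sub>F w in at \<xi>. F w * F (w - \<omega>) = 0"
    using assms(1) by (rule eventually_cosparse_imp_eventually_at) simp
  with assms(2) have "\<forall>\<^sub>F w in at \<xi>. F (w - \<omega>) = 0"
    by eventually_elim auto
  then have "\<forall>\<^sub>F w in at (1 * (\<xi> - \<omega>) + \<omega>). F (w - \<omega>) = 0"
    by simp
  from eventually_at_affine[OF _ this] show ?thesis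
    by simp
qed

lemma deriv_periodic:
  fixes f :: "complex \<Rightarrow> complex"
  assumes "\<And>z. f (z + l) = f z"
  shows "deriv f (z + l) = deriv f z"
proof -
  have "deriv f (z + l) = (SOME D. ((\<lambda>w. f (w + l)) has_field_derivative D) (at z))"
    by (simp add: deriv_def DERIV_shift)
  also have "(\<lambda>w. f (w + l)) = f"
    using assms by auto
  finally show ?thesis
    by (simp add: deriv_def)
qed

lemma tendsto_mult_at_simple_pole:
  fixes A B R :: "complex \<Rightarrow> complex"
  assumes A: "(A has_field_derivative A') (at z)" "A z = 0" and R: "isCont R 0"
    and B: "\<forall>\<^sub>F w in at z. B w = 1 / (w - z) + R (w - z)"
  shows "((\<lambda>w. A w * B w) \<longlongrightarrow> A') (at z)"
proof -
  have quotient: "((\<lambda>w. (A w - A z) / (w - z)) \<longlongrightarrow> A') (at z)"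
    using A(1) by (simp add: has_field_derivative_iff)
  have "isCont (\<lambda>w. R (w - z)) z"
    using isCont_o2[where f = "\<lambda>w. w - z" and a = z and g = R] R by (auto intro!: continuous_intros)
  then have "isCont (\<lambda>w. A w * R (w - z)) z"
    using DERIV_isCont[OF A(1)] by (intro continuous_intros)
  then have "((\<lambda>w. A w * R (w - z)) \<longlongrightarrow> 0) (at z)"
    using A(2) unfolding isCont_def by simp
  from tendsto_add[OF quotient this]
  have "((\<lambda>w. (A w - A z) / (w - z) + A w * R (w - z)) \<longlongrightarrow> A') (at z)"
    by simp
  moreover have "\<forall>\<^sub>F w in at z. (A w - A z) / (w - z) + A w * R (w - z) = A w * B w"
    using B by eventually_elim (use A(2) in \<open>simp add: algebra_simps\<close>)
  ultimately show ?thesis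
    by (rule Lim_transform_eventually)
qed

lemma eventually_nonzero_at_simple_pole:
  fixes F R :: "complex \<Rightarrow> complex"
  assumes "isCont R z" and "\<forall>\<^sub>F w in at z. F w = 1 / (w - z) + R w"
  shows "\<forall>\<^sub>F w in at z. F w \<noteq> 0"
proof -
  have "((\<lambda>w. (w - z) * R w) \<longlongrightarrow> 0) (at z)"
    using assms(1) by (auto intro!: tendsto_eq_intros simp: isCont_def)
  then have "\<forall>\<^sub>F w in at z. dist ((w - z) * R w) 0 < 1"
    by (rule tendstoD) simp
  with assms(2) eventually_neq_at_within[of z z UNIV] show ?thesis
  proof eventually_elim
    case (elim w)
    then have "(w - z) * F w = 1 + (w - z) * R w"
      by (simp add: field_simps)
    with elim(3) show ?case
      by (auto simp: add_eq_0_iff)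
  qed
qed

lemma holomorphic_remove_sings_UNIV:
  assumes "\<And>z. isolated_singularity_at f z" "\<And>z. \<exists>c. (f \<longlongrightarrow> c) (at z)"
  shows "remove_sings f holomorphic_on UNIV"
proof -
  have "remove_sings f analytic_on {z}" for z
    using assms(2)[of z] remove_sings_analytic_at[OF assms(1)] by blast
  then show ?thesis
    using analytic_imp_holomorphic analytic_on_analytic_at by blast
qed

lemma has_field_derivative_infsum_uniform:
  fixes g g' :: "'i \<Rightarrow> complex \<Rightarrow> complex"
  assumes r: "r > 0" and w: "w \<in> ball z r"
    and deriv: "\<And>i w. i \<in> I \<Longrightarrow> w \<in> cball z r \<Longrightarrow> (g i has_field_derivative g' i w) (at w)"
    and unif: "uniform_limit (cball z r) (\<lambda>X w. \<Sum>i\<in>X. g i w) (\<lambda>w. \<Sum>\<^sub>\<infinity>i\<in>I. g i w)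
                 (finite_subsets_at_top I)"
  shows "((\<lambda>w. \<Sum>\<^sub>\<infinity>i\<in>I. g i w) has_field_derivative (\<Sum>\<^sub>\<infinity>i\<in>I. g' i w)) (at w)"
    and "(\<lambda>i. g' i w) summable_on I"
proof -
  have "\<forall>\<^sub>F X in finite_subsets_at_top I. continuous_on (cball z r) (\<lambda>w. \<Sum>i\<in>X. g i w) \<and>
      (\<forall>w\<in>ball z r. ((\<lambda>w. \<Sum>i\<in>X. g i w) has_field_derivative (\<Sum>i\<in>X. g' i w)) (at w))"
  proof (rule eventually_finite_subsets_at_top_weakI)
    fix X assume X: "finite X" "X \<subseteq> I"
    have *: "((\<lambda>w. \<Sum>i\<in>X. g i w) has_field_derivative (\<Sum>i\<in>X. g' i w)) (at w)"
      if "w \<in> cball z r" for w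
      using X deriv that by (auto intro!: DERIV_sum)
    then have "continuous_on (cball z r) (\<lambda>w. \<Sum>i\<in>X. g i w)"
      by (intro continuous_at_imp_continuous_on) (blast intro: DERIV_isCont)
    with * show "continuous_on (cball z r) (\<lambda>w. \<Sum>i\<in>X. g i w) \<and>
      (\<forall>w\<in>ball z r. ((\<lambda>w. \<Sum>i\<in>X. g i w) has_field_derivative (\<Sum>i\<in>X. g' i w)) (at w))"
      by auto
  qed
  from has_complex_derivative_uniform_limit[OF this unif _ r]
  obtain D where D: "\<And>w. w \<in> ball z r \<Longrightarrow> ((\<lambda>w. \<Sum>\<^sub>\<infinity>i\<in>I. g i w) has_field_derivative D w) (at w) \<and>
      ((\<lambda>X. \<Sum>i\<in>X. g' i w) \<longlongrightarrow> D w) (finite_subsets_at_top I)"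
    by auto
  then have "((\<lambda>i. g' i w) has_sum D w) I"
    using w by (simp add: has_sum_def)
  then show "((\<lambda>w. \<Sum>\<^sub>\<infinity>i\<in>I. g i w) has_field_derivative (\<Sum>\<^sub>\<infinity>i\<in>I. g' i w)) (at w)"
    and "(\<lambda>i. g' i w) summable_on I"
    using D w by (auto simp: infsumI has_sum_imp_summable)
qed

definition inv_three_halves :: "real \<Rightarrow> real" where
  "inv_three_halves x = 1 / ((1 + x) * sqrt (1 + x))"

lemma inv_three_halves_nonneg: "x \<ge> 0 \<Longrightarrow> inv_three_halves x \<ge> 0"
  unfolding inv_three_halves_def by simp

lemma summable_inv_three_halves: "summable (\<lambda>k::nat. inv_three_halves (real k))"
proof -
  have "real (Suc n) powr (-(3/2)) = inv_three_halves (real n)" for n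
  proof -
    have "real (Suc n) powr (3/2) = real (Suc n) powr (1 + 1/2)"
      by simp
    also have "\<dots> = real (Suc n) powr 1 * real (Suc n) powr (1/2)"
      by (rule powr_add)
    also have "\<dots> = real (Suc n) * sqrt (real (Suc n))"
      by (simp add: powr_half_sqrt)
    finally have "real (Suc n) powr (3/2) = (1 + real n) * sqrt (1 + real n)"
      by simp
    then show ?thesis
      unfolding inv_three_halves_def by (metis powr_minus inverse_eq_divide)
  qed
  moreover have "summable (\<lambda>n::nat. real (Suc n) powr (-(3/2)))"
    by (subst summable_Suc_iff) (simp add: summable_real_powr_iff)
  ultimately show ?thesis
    by simp
qed

lemma sum_inv_three_halves_int_le:
  assumes "finite P"
  shows "(\<Sum>m\<in>P. inv_three_halves \<bar>of_int m\<bar>) \<le> 2 * (\<Sum>k. inv_three_halves (real k))"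
proof -
  let ?S = "\<Sum>k. inv_three_halves (real k)"
  let ?P = "{m\<in>P. 0 \<le> m}" and ?N = "{m\<in>P. m < 0}"
  have fin: "finite ?P" "finite ?N"
    using assms by auto
  have "(\<Sum>m\<in>?P. inv_three_halves \<bar>of_int m\<bar>) = (\<Sum>k\<in>nat ` ?P. inv_three_halves (real k))"
    by (subst sum.reindex) (auto simp: inj_on_def intro!: sum.cong)
  also have "\<dots> \<le> ?S"
    using fin by (intro sum_le_suminf summable_inv_three_halves) (auto intro: inv_three_halves_nonneg)
  finally have pos: "(\<Sum>m\<in>?P. inv_three_halves \<bar>of_int m\<bar>) \<le> ?S" .
  have "(\<Sum>m\<in>?N. inv_three_halves \<bar>of_int m\<bar>) = (\<Sum>k\<in>(\<lambda>m. nat (- m)) ` ?N. inv_three_halves (real k))"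
    by (subst sum.reindex) (auto simp: inj_on_def intro!: sum.cong)
  also have "\<dots> \<le> ?S"
    using fin by (intro sum_le_suminf summable_inv_three_halves) (auto intro: inv_three_halves_nonneg)
  finally have neg: "(\<Sum>m\<in>?N. inv_three_halves \<bar>of_int m\<bar>) \<le> ?S" .
  have "(\<Sum>m\<in>P. inv_three_halves \<bar>of_int m\<bar>) =
        (\<Sum>m\<in>?P. inv_three_halves \<bar>of_int m\<bar>) + (\<Sum>m\<in>?N. inv_three_halves \<bar>of_int m\<bar>)"
    using fin by (subst sum.union_disjoint[symmetric]) (auto intro!: sum.cong)
  then show ?thesis
    using pos neg by linarith
qed

lemma inv_cube_le_inv_three_halves:
  fixes m n :: int
  assumes "m \<noteq> 0 \<or> n \<noteq> 0"
  shows "1 / of_int (\<bar>m\<bar> + \<bar>n\<bar>) ^ 3 \<le> 8 * inv_three_halves \<bar>of_int m\<bar> * inv_three_halves \<bar>of_int n\<bar>"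
proof -
  define s where "s = real_of_int (\<bar>m\<bar> + \<bar>n\<bar>)"
  define a where "a = 1 + real_of_int \<bar>m\<bar>"
  define c where "c = 1 + real_of_int \<bar>n\<bar>"
  have s1: "s \<ge> 1" using assms unfolding s_def by linarith
  have a1: "a \<ge> 1" and c1: "c \<ge> 1" unfolding a_def c_def by auto
  have "a * c \<le> (1 + s)^2" unfolding a_def c_def s_def by (simp add: power2_eq_square algebra_simps)
  also have "\<dots> \<le> (2 * s)^2" using s1 by (intro power_mono) auto
  finally have ac: "a * c \<le> 4 * s^2" by (simp add: power_mult_distrib)
  have "sqrt (a * c) \<le> sqrt (4 * s^2)" using ac by (rule real_sqrt_le_mono)
  also have "\<dots> = 2 * s" using s1 by (simp add: real_sqrt_mult)
  finally have sq: "sqrt (a * c) \<le> 2 * s" .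
  have "(a * sqrt a) * (c * sqrt c) = (a * c) * sqrt (a * c)" by (simp add: real_sqrt_mult)
  also have "\<dots> \<le> (4 * s^2) * (2 * s)" by (rule mult_mono[OF ac sq]) (use a1 c1 in auto)
  also have "\<dots> = 8 * s^3" by (simp add: power2_eq_square power3_eq_cube)
  finally have le: "(a * sqrt a) * (c * sqrt c) \<le> 8 * s^3" .
  have pos: "(a * sqrt a) * (c * sqrt c) > 0" using a1 c1 by simp
  have "1 / s^3 = 8 / (8 * s^3)" using s1 by simp
  also have "\<dots> \<le> 8 / ((a * sqrt a) * (c * sqrt c))"
    using le pos s1 a1 c1 by (intro divide_left_mono mult_pos_pos) auto
  also have "\<dots> = 8 * inv_three_halves \<bar>of_int m\<bar> * inv_three_halves \<bar>of_int n\<bar>"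
    unfolding inv_three_halves_def a_def c_def by simp
  finally show ?thesis unfolding s_def .
qed

definition zeta_term :: "complex \<Rightarrow> complex \<Rightarrow> complex" where
  "zeta_term l w = 1 / (w - l) + 1 / l + w / l\<^sup>2"

definition zeta_deriv_term :: "complex \<Rightarrow> complex \<Rightarrow> complex" where
  "zeta_deriv_term l w = - 1 / (w - l)\<^sup>2 + 1 / l\<^sup>2"

definition zeta_deriv2_term :: "complex \<Rightarrow> complex \<Rightarrow> complex" where
  "zeta_deriv2_term l w = 2 / (w - l) ^ 3"

lemma has_field_derivative_zeta_term:
  "w \<noteq> l \<Longrightarrow> l \<noteq> 0 \<Longrightarrow> (zeta_term l has_field_derivative zeta_deriv_term l w) (at w)"
  unfolding zeta_term_def zeta_deriv_term_def
  by (auto intro!: derivative_eq_intros simp: power2_eq_square field_simps)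

lemma has_field_derivative_zeta_deriv_term:
  assumes "w \<noteq> l"
  shows "(zeta_deriv_term l has_field_derivative zeta_deriv2_term l w) (at w)"
proof -
  have "((\<lambda>w. - 1 / (w - l)\<^sup>2) has_field_derivative 2 / (w - l) ^ 3) (at w)"
    by (rule derivative_eq_intros refl)+
      (use assms in \<open>simp_all add: power2_eq_square power3_eq_cube divide_simps\<close>)
  from DERIV_add[OF this DERIV_const[of "1 / l\<^sup>2"]] show ?thesis
    unfolding zeta_deriv_term_def[abs_def] zeta_deriv2_term_def by simp
qed

lemma norm_diff_ge_half:
  assumes "norm w \<le> R" "2 * R \<le> norm l"
  shows "norm (w - l) \<ge> norm l / 2"
  using norm_triangle_ineq4[of w "w - l"] assms by simp

lemma norm_zeta_term_le:
  assumes "norm w \<le> R" "2 * R \<le> norm l" "l \<noteq> 0"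
  shows "norm (zeta_term l w) \<le> 2 * R\<^sup>2 / norm l ^ 3"
proof -
  have d: "norm (w - l) \<ge> norm l / 2" using norm_diff_ge_half assms by blast
  have lp: "norm l > 0" using assms by simp
  then have wl: "w - l \<noteq> 0" using d by auto
  have "zeta_term l w = w\<^sup>2 / (l\<^sup>2 * (w - l))" unfolding zeta_term_def using wl assms(3)
    by (simp add: divide_simps) (simp add: power2_eq_square algebra_simps)
  then have "norm (zeta_term l w) = norm w ^ 2 / (norm l ^ 2 * norm (w - l))"
    by (simp add: norm_divide norm_mult norm_power)
  also have "\<dots> \<le> R\<^sup>2 / (norm l ^ 2 * (norm l / 2))"
    using assms d lp by (intro frac_le mult_left_mono power_mono mult_pos_pos) auto
  also have "\<dots> = 2 * R\<^sup>2 / norm l ^ 3" by (simp add: power2_eq_square power3_eq_cube)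
  finally show ?thesis .
qed

lemma norm_zeta_deriv_term_le:
  assumes "norm w \<le> R" "2 * R \<le> norm l" "l \<noteq> 0"
  shows "norm (zeta_deriv_term l w) \<le> 12 * R / norm l ^ 3"
proof -
  have d: "norm (w - l) \<ge> norm l / 2" using norm_diff_ge_half assms by blast
  have lp: "norm l > 0" using assms by simp
  then have wl: "w - l \<noteq> 0" using d by auto
  have R0: "R \<ge> 0" using assms(1) norm_ge_zero order_trans by blast
  have "zeta_deriv_term l w = w * (w - 2 * l) / (l\<^sup>2 * (w - l)\<^sup>2)"
    unfolding zeta_deriv_term_def using wl assms(3)
    by (simp add: divide_simps) (simp add: power2_eq_square algebra_simps)
  then have "norm (zeta_deriv_term l w) = norm w * norm (w - 2 * l) / (norm l ^ 2 * norm (w - l) ^ 2)"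
    by (simp add: norm_divide norm_mult norm_power)
  also have "\<dots> \<le> (R * (3 * norm l)) / (norm l ^ 2 * (norm l / 2) ^ 2)"
  proof (intro frac_le mult_left_mono power_mono mult_pos_pos mult_mono)
    have "norm (w - 2 * l) \<le> norm w + norm (2 * l)" by (rule norm_triangle_ineq4)
    moreover have "norm (2 * l) = 2 * norm l" by (simp add: norm_mult)
    ultimately show "norm (w - 2 * l) \<le> 3 * norm l"
      using assms norm_ge_zero[of l] by linarith
  qed (use assms d lp R0 in auto)
  also have "\<dots> = 12 * R / norm l ^ 3"
    using lp by (simp add: power2_eq_square power3_eq_cube field_simps)
  finally show ?thesis .
qed

lemma exp_nilp_carrier:
  assumes "M \<in> carrier_mat r r"
  shows "exp_nilp M \<in> carrier_mat r r"
proof -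
  have "foldr (\<lambda>k acc. (1 / of_nat (fact k)) \<cdot>\<^sub>m (M ^\<^sub>m k) + acc) ks (0\<^sub>m r r) \<in> carrier_mat r r" for ks
    by (induction ks) (use assms pow_carrier_mat in auto)
  then show ?thesis
    using assms by (simp add: exp_nilp_def)
qed

lemma exp_nilp_index:
  assumes M: "M \<in> carrier_mat r r" and "i < r" "j < r"
  shows "exp_nilp M $$ (i, j) = (\<Sum>k<r. (M ^\<^sub>m k) $$ (i, j) / fact k)"
proof -
  have "foldr (\<lambda>k acc. (1 / of_nat (fact k)) \<cdot>\<^sub>m (M ^\<^sub>m k) + acc) ks (0\<^sub>m r r) \<in> carrier_mat r r \<and>
      foldr (\<lambda>k acc. (1 / of_nat (fact k)) \<cdot>\<^sub>m (M ^\<^sub>m k) + acc) ks (0\<^sub>m r r) $$ (i, j) =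
      (\<Sum>k\<leftarrow>ks. (M ^\<^sub>m k) $$ (i, j) / fact k)" for ks
    by (induction ks) (use assms pow_carrier_mat in auto)
  from this[of "[0..<r]"] show ?thesis
    using M by (simp add: exp_nilp_def atLeast0LessThan[symmetric] sum_set_upt_conv_sum_list_nat[symmetric])
qed

lemma scaled_Nmat_power_index:
  assumes "i < r" "j < r"
  shows "((x \<cdot>\<^sub>m Nmat r) ^\<^sub>m k) $$ (i, j) = (if j = i + k then x ^ k else 0)"
  using assms
proof (induction k arbitrary: j)
  case 0
  then show ?case
    by (simp add: Nmat_def)
next
  case (Suc k)
  let ?A = "x \<cdot>\<^sub>m Nmat r"
  have "?A \<in> carrier_mat r r"
    by (simp add: Nmat_def)
  then have "dim_row (?A ^\<^sub>m k) = r" "dim_col ?A = r" "dim_row ?A = r"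
    by auto
  then have "(?A ^\<^sub>m Suc k) $$ (i, j) = (\<Sum>l = 0..<r. (?A ^\<^sub>m k) $$ (i, l) * ?A $$ (l, j))"
    using Suc.prems by (simp add: index_mult_mat scalar_prod_def)
  also have "\<dots> = (\<Sum>l = 0..<r. if l = i + k then x ^ k * (x * (if j = l + 1 then 1 else 0)) else 0)"
    using Suc.IH Suc.prems by (intro sum.cong) (auto simp: Nmat_def)
  also have "\<dots> = (if j = i + Suc k then x ^ Suc k else 0)"
    using Suc.prems by (subst sum.delta) auto
  finally show ?case .
qed

lemma exp_nilp_scaled_Nmat_index:
  assumes "i < r" "j < r"
  shows "exp_nilp (x \<cdot>\<^sub>m Nmat r) $$ (i, j) = (if i \<le> j then x ^ (j - i) / fact (j - i) else 0)"
proof -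
  have "exp_nilp (x \<cdot>\<^sub>m Nmat r) $$ (i, j) = (\<Sum>k<r. ((x \<cdot>\<^sub>m Nmat r) ^\<^sub>m k) $$ (i, j) / fact k)"
    by (rule exp_nilp_index) (simp_all add: Nmat_def assms)
  also have "\<dots> = (\<Sum>k<r. if k = j - i then (if i \<le> j then x ^ k / fact k else 0) else 0)"
    using assms by (intro sum.cong) (auto simp: scaled_Nmat_power_index)
  also have "\<dots> = (if i \<le> j then x ^ (j - i) / fact (j - i) else 0)"
    using assms by (subst sum.delta) auto
  finally show ?thesis .
qed

lemma last_row_conjugation:
  fixes T A :: "complex mat"
  assumes T: "T \<in> carrier_mat r r" and A: "A \<in> carrier_mat r r" and j: "j < r"
    and eq: "exp_nilp (g \<cdot>\<^sub>m Nmat r) * T = A * exp_nilp (f \<cdot>\<^sub>m Nmat r)"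
  shows "T $$ (r - 1, j) = (\<Sum>l\<le>j. A $$ (r - 1, l) * f ^ (j - l) / fact (j - l))"
proof -
  have exp: "exp_nilp (x \<cdot>\<^sub>m Nmat r) \<in> carrier_mat r r" for x
    by (rule exp_nilp_carrier) (simp add: Nmat_def)
  have last: "r - 1 < r"
    using j by simp
  have "(exp_nilp (g \<cdot>\<^sub>m Nmat r) * T) $$ (r - 1, j) =
      (\<Sum>l = 0..<r. exp_nilp (g \<cdot>\<^sub>m Nmat r) $$ (r - 1, l) * T $$ (l, j))"
    using exp[of g] T j last by (simp add: index_mult_mat scalar_prod_def)
  also have "\<dots> = (\<Sum>l = 0..<r. if l = r - 1 then T $$ (r - 1, j) else 0)"
    using last by (intro sum.cong) (auto simp: exp_nilp_scaled_Nmat_index)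
  also have "\<dots> = T $$ (r - 1, j)"
    using last by simp
  finally have lhs: "(exp_nilp (g \<cdot>\<^sub>m Nmat r) * T) $$ (r - 1, j) = T $$ (r - 1, j)" .
  have "(A * exp_nilp (f \<cdot>\<^sub>m Nmat r)) $$ (r - 1, j) =
      (\<Sum>l = 0..<r. A $$ (r - 1, l) * exp_nilp (f \<cdot>\<^sub>m Nmat r) $$ (l, j))"
    using exp[of f] A j last by (simp add: index_mult_mat scalar_prod_def)
  also have "\<dots> = (\<Sum>l = 0..<r. A $$ (r - 1, l) * (if l \<le> j then f ^ (j - l) / fact (j - l) else 0))"
    using j by (intro sum.cong) (auto simp: exp_nilp_scaled_Nmat_index)
  also have "\<dots> = (\<Sum>l\<le>j. A $$ (r - 1, l) * f ^ (j - l) / fact (j - l))"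
    using j by (simp add: if_distrib sum.If_cases atLeast0LessThan Int_absorb1 subset_eq lessThan_iff atMost_def)
  finally show ?thesis
    using lhs eq by simp
qed

lemma split_block_last_row:
  assumes "M \<in> carrier_mat r r" "0 < r"
  shows "split_block M (r - 1) (r - 1) = (mat (r - 1) (r - 1) (($$) M),
    mat (r - 1) 1 (\<lambda>(i, _). M $$ (i, r - 1)),
    mat 1 (r - 1) (\<lambda>(_, j). M $$ (r - 1, j)), mat 1 1 (\<lambda>_. M $$ (r - 1, r - 1)))"
proof -
  have r: "r - (r - Suc 0) = Suc 0"
    using assms(2) by simp
  show ?thesis
    using assms(1) by (auto simp: split_block_def Let_def r intro!: eq_matI)
qed

lemma sum_lower_terms_vanish:
  fixes f :: "nat \<Rightarrow> 'a::comm_monoid_add"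
  assumes "\<And>l. l < j \<Longrightarrow> f l = 0"
  shows "(\<Sum>l\<le>j. f l) = f j" "(\<Sum>l\<le>Suc j. f l) = f j + f (Suc j)"
  using assms by (simp_all add: lessThan_Suc_atMost[symmetric])

subsection \<open>Lattices\<close>

locale complex_lattice =
  fixes w1 w2 :: complex
  assumes basis: "is_lattice_basis w1 w2"
begin

abbreviation \<Lambda> :: "complex set" where "\<Lambda> \<equiv> lattice w1 w2"

lemma mem_lattice_iff: "z \<in> \<Lambda> \<longleftrightarrow> (\<exists>m n::int. z = of_int m * w1 + of_int n * w2)"
  by (auto simp: lattice_def)

lemma lattice_combination [simp]: "of_int m * w1 + of_int n * w2 \<in> \<Lambda>"
  by (auto simp: mem_lattice_iff)

lemma zero_in_lattice [simp]: "0 \<in> \<Lambda>"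
  using lattice_combination[of 0 0] by simp

lemma w1_in_lattice [simp]: "w1 \<in> \<Lambda>"
  using lattice_combination[of 1 0] by simp

lemma w2_in_lattice [simp]: "w2 \<in> \<Lambda>"
  using lattice_combination[of 0 1] by simp

lemma lattice_add: "x \<in> \<Lambda> \<Longrightarrow> y \<in> \<Lambda> \<Longrightarrow> x + y \<in> \<Lambda>"
proof -
  assume "x \<in> \<Lambda>" "y \<in> \<Lambda>"
  then obtain m n m' n' :: int
    where "x = of_int m * w1 + of_int n * w2" "y = of_int m' * w1 + of_int n' * w2"
    by (auto simp: mem_lattice_iff)
  then have "x + y = of_int (m + m') * w1 + of_int (n + n') * w2"
    by (simp add: algebra_simps)
  then show ?thesis
    by (simp only: lattice_combination)
qed

lemma lattice_of_int_mult: "x \<in> \<Lambda> \<Longrightarrow> of_int k * x \<in> \<Lambda>"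
proof -
  assume "x \<in> \<Lambda>"
  then obtain m n :: int where "x = of_int m * w1 + of_int n * w2"
    by (auto simp: mem_lattice_iff)
  then have "of_int k * x = of_int (k * m) * w1 + of_int (k * n) * w2"
    by (simp add: algebra_simps)
  then show ?thesis
    by (simp only: lattice_combination)
qed

lemma lattice_of_nat_mult: "x \<in> \<Lambda> \<Longrightarrow> of_nat k * x \<in> \<Lambda>"
  using lattice_of_int_mult[of x "int k"] by simp

lemma lattice_uminus_iff [simp]: "- x \<in> \<Lambda> \<longleftrightarrow> x \<in> \<Lambda>"
  using lattice_of_int_mult[of x "-1"] lattice_of_int_mult[of "-x" "-1"] by auto

lemma lattice_diff: "x \<in> \<Lambda> \<Longrightarrow> y \<in> \<Lambda> \<Longrightarrow> x - y \<in> \<Lambda>"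
  using lattice_add[of x "-y"] by simp

lemma add_lattice_iff [simp]: "l \<in> \<Lambda> \<Longrightarrow> w + l \<in> \<Lambda> \<longleftrightarrow> w \<in> \<Lambda>"
  using lattice_diff[of "w + l" l] lattice_add[of w l] by auto

definition signed_area where
  "signed_area = Im (cnj w1 * w2)"

definition coord1 :: "complex \<Rightarrow> real" where
  "coord1 z = Im (cnj z * w2) / signed_area"

definition coord2 :: "complex \<Rightarrow> real" where
  "coord2 z = Im (cnj w1 * z) / signed_area"

definition coord_const where
  "coord_const = (norm w1 + norm w2) / \<bar>signed_area\<bar>"

lemma signed_area_nonzero: "signed_area \<noteq> 0"
proof -
  have "Im (w2 / w1) \<noteq> 0"
    using basis by (simp add: is_lattice_basis_def)
  then show ?thesis
    unfolding signed_area_def by (auto simp: Im_divide algebra_simps)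
qed

lemma coord_const_pos: "coord_const > 0"
  using signed_area_nonzero basis
  by (simp add: coord_const_def is_lattice_basis_def add_pos_nonneg)

lemma coords_decomp: "z = of_real (coord1 z) * w1 + of_real (coord2 z) * w2"
proof -
  have "Im (cnj z * w2) * Re w1 + Im (cnj w1 * z) * Re w2 = Re z * signed_area"
       "Im (cnj z * w2) * Im w1 + Im (cnj w1 * z) * Im w2 = Im z * signed_area"
    by (simp_all add: signed_area_def algebra_simps)
  then have "coord1 z * Re w1 + coord2 z * Re w2 = Re z" "coord1 z * Im w1 + coord2 z * Im w2 = Im z"
    using signed_area_nonzero unfolding coord1_def coord2_def by (simp_all add: add_divide_distrib[symmetric])
  then show ?thesis
    by (simp add: complex_eq_iff)
qed

lemma coords_combination:
  "coord1 (of_real a * w1 + of_real b * w2) = a" "coord2 (of_real a * w1 + of_real b * w2) = b"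
  using signed_area_nonzero unfolding coord1_def coord2_def signed_area_def
  by (auto simp: field_simps algebra_simps)

lemma mem_lattice_iff_coords: "z \<in> \<Lambda> \<longleftrightarrow> coord1 z \<in> \<int> \<and> coord2 z \<in> \<int>"
proof
  assume "z \<in> \<Lambda>"
  then obtain m n :: int where "z = of_real (of_int m) * w1 + of_real (of_int n) * w2"
    by (auto simp: mem_lattice_iff)
  then show "coord1 z \<in> \<int> \<and> coord2 z \<in> \<int>"
    by (simp only: coords_combination Ints_of_int)
next
  assume "coord1 z \<in> \<int> \<and> coord2 z \<in> \<int>"
  then obtain m n :: int where "coord1 z = of_int m" "coord2 z = of_int n"
    by (auto elim!: Ints_cases)
  then show "z \<in> \<Lambda>"
    using coords_decomp[of z] by simp
qed

lemma abs_coords_le: "\<bar>coord1 z\<bar> + \<bar>coord2 z\<bar> \<le> coord_const * norm z"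
proof -
  have "\<bar>Im (cnj z * w2)\<bar> \<le> norm z * norm w2" "\<bar>Im (cnj w1 * z)\<bar> \<le> norm z * norm w1"
    using abs_Im_le_cmod[of "cnj z * w2"] abs_Im_le_cmod[of "cnj w1 * z"]
    by (simp_all add: norm_mult mult.commute)
  then have "\<bar>coord1 z\<bar> \<le> norm z * norm w2 / \<bar>signed_area\<bar>"
    "\<bar>coord2 z\<bar> \<le> norm z * norm w1 / \<bar>signed_area\<bar>"
    unfolding coord1_def coord2_def by (simp_all add: abs_div divide_right_mono)
  then show ?thesis
    unfolding coord_const_def by (simp add: add_divide_distrib algebra_simps)
qed

lemma lattice_norm_ge:
  assumes "l \<in> \<Lambda>" "l \<noteq> 0"
  shows "1 / coord_const \<le> norm l"
proof -
  have "coord1 l \<noteq> 0 \<or> coord2 l \<noteq> 0"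
    using assms coords_decomp[of l] by auto
  moreover have "coord1 l \<in> \<int>" "coord2 l \<in> \<int>"
    using assms by (simp_all add: mem_lattice_iff_coords)
  ultimately have "1 \<le> \<bar>coord1 l\<bar> + \<bar>coord2 l\<bar>"
    by (auto elim!: Ints_cases)
  also have "\<dots> \<le> coord_const * norm l"
    by (rule abs_coords_le)
  finally show ?thesis
    using coord_const_pos by (simp add: field_simps)
qed

lemma not_islimpt_lattice: "\<not> z islimpt \<Lambda>"
proof (rule discrete_imp_not_islimpt[of "1 / coord_const"])
  fix x y assume "x \<in> \<Lambda>" "y \<in> \<Lambda>" "dist y x < 1 / coord_const"
  then show "y = x"
    using lattice_norm_ge[of "y - x"] lattice_diff[of y x] by (force simp: dist_norm)
qed (use coord_const_pos in simp)

lemma closed_lattice_diff: "closed (\<Lambda> - A)"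
  using not_islimpt_lattice islimpt_subset[of _ "\<Lambda> - A" \<Lambda>] by (auto simp: closed_limpt)

lemma open_lattice_compl: "open (- \<Lambda>)"
  using closed_lattice_diff[of "{}"] by (simp add: open_Compl)

lemma connected_lattice_compl: "connected (- \<Lambda>)"
proof -
  have "\<Lambda> = (\<lambda>(m, n). of_int m * w1 + of_int n * w2) ` (UNIV :: (int \<times> int) set)"
    by (auto simp: lattice_def)
  then have "countable \<Lambda>"
    by simp
  then have "connected (UNIV - \<Lambda>)"
    by (intro connected_open_diff_countable) auto
  then show ?thesis
    by (simp add: Compl_eq_Diff_UNIV)
qed

lemma finite_lattice_cball: "finite (\<Lambda> \<inter> cball 0 R)"
  using finite_not_islimpt_in_compact[of "cball 0 R" \<Lambda>] not_islimpt_lattice by (simp add: Int_commute)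

lemma lattice_sparse: "\<Lambda> sparse_in UNIV"
  using not_islimpt_lattice by (auto simp: sparse_in_def)

lemma eventually_not_in_lattice: "\<forall>\<^sub>\<approx>w. w \<notin> \<Lambda>"
  by (rule eventually_not_in_cosparse[OF lattice_sparse])

lemma lattice_periodic_bounded:
  assumes "continuous_on UNIV f" and periodic: "\<And>z l. l \<in> \<Lambda> \<Longrightarrow> f (z + l) = f z"
  shows "bounded (range f)"
proof -
  define P where "P = (\<lambda>(x, y). of_real x * w1 + of_real y * w2) ` ({0..1::real} \<times> {0..1::real})"
  have "compact P"
    unfolding P_def by (intro compact_continuous_image compact_Times)
      (auto intro!: continuous_intros simp: case_prod_unfold)
  then have "compact (f ` P)"
    using assms(1) by (intro compact_continuous_image) (auto intro: continuous_on_subset)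
  moreover have "range f \<subseteq> f ` P"
  proof clarify
    fix z
    define l where "l = of_int \<lfloor>coord1 z\<rfloor> * w1 + of_int \<lfloor>coord2 z\<rfloor> * w2"
    have "z - l = of_real (frac (coord1 z)) * w1 + of_real (frac (coord2 z)) * w2"
      using coords_decomp[of z] unfolding l_def frac_def by (simp add: algebra_simps)
    moreover have "frac (coord1 z) \<in> {0..1}" "frac (coord2 z) \<in> {0..1}"
      by (simp_all add: frac_lt_1 less_imp_le)
    ultimately have "z - l \<in> P"
      unfolding P_def by (auto intro!: image_eqI[of _ _ "(frac (coord1 z), frac (coord2 z))"])
    moreover have "l \<in> \<Lambda>"
      unfolding l_def by (rule lattice_combination)
    then have "f z = f (z - l)"
      using periodic[of l "z - l"] by simp
    ultimately show "f z \<in> f ` P"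
      by blast
  qed
  ultimately show ?thesis
    using compact_imp_bounded bounded_subset by blast
qed

lemma entire_lattice_periodic_imp_constant:
  assumes "f holomorphic_on UNIV" and "\<And>z l. l \<in> \<Lambda> \<Longrightarrow> f (z + l) = f z"
  obtains c where "\<And>z. f z = c"
proof -
  have "bounded (range f)"
    using assms holomorphic_on_imp_continuous_on lattice_periodic_bounded by blast
  then have "f constant_on UNIV"
    using Liouville_theorem assms(1) by blast
  then show ?thesis
    using that unfolding constant_on_def by blast
qed

lemma periodic_off_lattice_if_eventually_cosparse:
  fixes f :: "complex \<Rightarrow> complex"
  assumes "continuous_on (- \<Lambda>) f" "l \<in> \<Lambda>" "w \<notin> \<Lambda>" "\<forall>\<^sub>\<approx>w. f (w + l) = f w"
  shows "f (w + l) = f w"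
proof (rule eq_if_eventually_cosparse[where f = "\<lambda>w. f (w + l)" and g = f, OF _ _ assms(4)])
  have cont: "isCont f u" if "u \<notin> \<Lambda>" for u
    using assms(1) open_lattice_compl that by (simp add: continuous_on_eq_continuous_at)
  show "isCont f w"
    using cont assms(3) .
  have "isCont (\<lambda>w. w + l) w" "isCont f (w + l)"
    using cont assms(2,3) by simp_all
  then show "isCont (\<lambda>w. f (w + l)) w"
    by (rule isCont_o2)
qed

lemma entire_eventually_periodic_imp_constant:
  assumes f: "f holomorphic_on UNIV" and periodic: "\<And>l. l \<in> \<Lambda> \<Longrightarrow> \<forall>\<^sub>\<approx>w. f (w + l) = f w"
  obtains c where "\<And>z. f z = c"
proof -
  have "f (z + l) = f z" if "l \<in> \<Lambda>" for z l
    using holomorphic_on_imp_continuous_on[OF f] periodic[OF that] by (rule periodic_if_eventually_cosparse)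
  then show ?thesis
    using entire_lattice_periodic_imp_constant[OF f] that by blast
qed

lemma entire_multiple_periodic_imp_constant:
  fixes f :: "complex \<Rightarrow> complex" and N :: nat
  assumes f: "f holomorphic_on UNIV" and N: "N > 0"
    and periodic: "\<And>l. l \<in> \<Lambda> \<Longrightarrow> \<forall>\<^sub>\<approx>w. f (w + of_nat N * l) = f w"
  obtains c where "\<And>w. f w = c"
proof -
  define g where "g z = f (of_nat N * z)" for z
  have "f \<circ> (\<lambda>z. of_nat N * z) holomorphic_on UNIV"
    by (rule holomorphic_on_compose_gen[OF _ f]) (auto intro: holomorphic_intros)
  then have "g holomorphic_on UNIV"
    by (simp add: g_def[abs_def] o_def)
  moreover have "\<forall>\<^sub>\<approx>z. g (z + l) = g z" if "l \<in> \<Lambda>" for l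
    using eventually_cosparse_affine[where a = "of_nat N" and b = 0, OF _ periodic[OF that]] N
    by (simp add: g_def distrib_left)
  ultimately obtain c where c: "\<And>z. g z = c"
    using entire_eventually_periodic_imp_constant by blast
  show ?thesis
  proof (rule that)
    show "f w = c" for w
      using c[of "w / of_nat N"] N by (simp add: g_def)
  qed
qed

text \<open>Bounding \<open>1 / |m w1 + n w2|^3\<close> by a product of terms of two convergent series in \<open>m\<close>
  and \<open>n\<close> reduces summability over the lattice to that of a product of two series.\<close>

lemma inv_cube_norm_le:
  assumes "l \<in> \<Lambda>" "l \<noteq> 0"
  shows "1 / norm l ^ 3 \<le>
    coord_const ^ 3 * 8 * inv_three_halves \<bar>coord1 l\<bar> * inv_three_halves \<bar>coord2 l\<bar>"
proof -
  obtain m n :: int where mn: "coord1 l = of_int m" "coord2 l = of_int n"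
    using assms(1) by (auto simp: mem_lattice_iff_coords elim!: Ints_cases)
  have "m \<noteq> 0 \<or> n \<noteq> 0"
    using assms(2) coords_decomp[of l] mn by auto
  then have one_le: "1 \<le> real_of_int (\<bar>m\<bar> + \<bar>n\<bar>)"
    by linarith
  have "real_of_int (\<bar>m\<bar> + \<bar>n\<bar>) \<le> coord_const * norm l"
    using abs_coords_le[of l] mn by simp
  then have "real_of_int (\<bar>m\<bar> + \<bar>n\<bar>) ^ 3 \<le> (coord_const * norm l) ^ 3"
    using one_le by (intro power_mono) auto
  then have "1 / (coord_const * norm l) ^ 3 \<le> 1 / real_of_int (\<bar>m\<bar> + \<bar>n\<bar>) ^ 3"
    using one_le assms coord_const_pos by (intro divide_left_mono mult_pos_pos) auto
  also have "\<dots> \<le> 8 * inv_three_halves \<bar>coord1 l\<bar> * inv_three_halves \<bar>coord2 l\<bar>"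
    using inv_cube_le_inv_three_halves[OF \<open>m \<noteq> 0 \<or> n \<noteq> 0\<close>] mn by simp
  finally have "coord_const ^ 3 * (1 / (coord_const * norm l) ^ 3) \<le>
      coord_const ^ 3 * (8 * inv_three_halves \<bar>coord1 l\<bar> * inv_three_halves \<bar>coord2 l\<bar>)"
    using coord_const_pos by (intro mult_left_mono) auto
  then show ?thesis
    using coord_const_pos by (simp add: power_mult_distrib)
qed

lemma sum_lattice_inverse_cube_le:
  assumes X: "X \<subseteq> \<Lambda> - {0}" "finite X"
  shows "(\<Sum>l\<in>X. 1 / norm l ^ 3) \<le> coord_const ^ 3 * 8 * (2 * (\<Sum>k. inv_three_halves (real k)))\<^sup>2"
proof -
  define S where "S = (\<Sum>k. inv_three_halves (real k))"
  define C where "C = coord_const ^ 3 * 8"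
  define g where "g = (\<lambda>(m, n). inv_three_halves \<bar>of_int m\<bar> * inv_three_halves \<bar>of_int n\<bar>)"
  define ints where "ints l = (\<lfloor>coord1 l\<rfloor>, \<lfloor>coord2 l\<rfloor>)" for l
  have C: "C \<ge> 0"
    using coord_const_pos by (simp add: C_def)
  have S: "S \<ge> 0"
    unfolding S_def by (intro suminf_nonneg summable_inv_three_halves inv_three_halves_nonneg) simp
  have coords_int: "coord1 l = of_int \<lfloor>coord1 l\<rfloor>" "coord2 l = of_int \<lfloor>coord2 l\<rfloor>" if "l \<in> X" for l
    using that X by (auto simp: mem_lattice_iff_coords)
  have inj: "inj_on ints X"
  proof (rule inj_onI)
    fix a b assume "a \<in> X" "b \<in> X" "ints a = ints b"
    then have "coord1 a = coord1 b" "coord2 a = coord2 b"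
      using coords_int[of a] coords_int[of b] by (simp_all add: ints_def)
    then show "a = b"
      using coords_decomp[of a] coords_decomp[of b] by simp
  qed
  have "1 / norm l ^ 3 \<le> C * g (ints l)" if "l \<in> X" for l
  proof -
    have "g (ints l) = inv_three_halves \<bar>coord1 l\<bar> * inv_three_halves \<bar>coord2 l\<bar>"
      using coords_int[OF that] by (simp add: g_def ints_def)
    moreover have "l \<in> \<Lambda>" "l \<noteq> 0"
      using that X by auto
    ultimately show ?thesis
      using inv_cube_norm_le[of l] by (simp add: C_def mult.assoc)
  qed
  then have "(\<Sum>l\<in>X. 1 / norm l ^ 3) \<le> C * (\<Sum>p\<in>ints ` X. g p)"
    by (simp add: sum_distrib_left sum.reindex[OF inj] sum_mono)
  also have "\<dots> \<le> C * (\<Sum>p\<in>(fst ` ints ` X) \<times> (snd ` ints ` X). g p)"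
    using X C subset_fst_snd[of "ints ` X"]
    by (intro mult_left_mono sum_mono2) (auto simp: g_def case_prod_unfold inv_three_halves_nonneg)
  also have "(\<Sum>p\<in>(fst ` ints ` X) \<times> (snd ` ints ` X). g p) =
      (\<Sum>m\<in>fst ` ints ` X. inv_three_halves \<bar>of_int m\<bar>) * (\<Sum>n\<in>snd ` ints ` X. inv_three_halves \<bar>of_int n\<bar>)"
    unfolding g_def by (simp add: sum_product sum.cartesian_product case_prod_unfold)
  also have "\<dots> \<le> (2 * S) * (2 * S)"
    using X S unfolding S_def
    by (intro mult_mono sum_inv_three_halves_int_le sum_nonneg inv_three_halves_nonneg) auto
  finally have "(\<Sum>l\<in>X. 1 / norm l ^ 3) \<le> C * ((2 * S) * (2 * S))"
    using C by (simp add: mult_left_mono)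
  then show ?thesis
    by (simp add: C_def S_def power2_eq_square)
qed

lemma summable_on_lattice_inverse_cube: "(\<lambda>l. 1 / norm l ^ 3) summable_on (\<Lambda> - {0})"
proof (rule nonneg_bdd_above_summable_on)
  show "bdd_above (sum (\<lambda>l. 1 / norm l ^ 3) ` {X. X \<subseteq> \<Lambda> - {0} \<and> finite X})"
    using sum_lattice_inverse_cube_le unfolding bdd_above_def by blast
qed simp

subsection \<open>The Weierstrass zeta function\<close>

lemma uniform_limit_lattice_sum:
  fixes g :: "complex \<Rightarrow> complex \<Rightarrow> complex"
  assumes "compact K"
    and cont: "\<And>l. l \<in> \<Lambda> - {0} \<Longrightarrow> continuous_on K (g l)"
    and tail: "\<And>l w. l \<in> \<Lambda> - {0} \<Longrightarrow> norm l \<ge> R \<Longrightarrow> w \<in> K \<Longrightarrow> norm (g l w) \<le> C / norm l ^ 3"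
  shows "uniform_limit K (\<lambda>X w. \<Sum>l\<in>X. g l w) (\<lambda>w. \<Sum>\<^sub>\<infinity>l\<in>\<Lambda>-{0}. g l w)
           (finite_subsets_at_top (\<Lambda> - {0}))"
proof -
  have "\<exists>B. \<forall>w\<in>K. norm (g l w) \<le> B" if "l \<in> \<Lambda> - {0}" for l
    using compact_imp_bounded[OF compact_continuous_image[OF cont[OF that] \<open>compact K\<close>]]
    by (auto simp: bounded_iff)
  then obtain B where B: "\<And>l w. l \<in> \<Lambda> - {0} \<Longrightarrow> w \<in> K \<Longrightarrow> norm (g l w) \<le> B l"
    by metis
  define M where "M l = (if norm l \<ge> R then C / norm l ^ 3 else B l)" for l
  define near where "near = {l \<in> \<Lambda> - {0}. norm l < R}"
  define far where "far = {l \<in> \<Lambda> - {0}. norm l \<ge> R}"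
  have "finite near"
    by (rule finite_subset[OF _ finite_lattice_cball[of R]]) (auto simp: near_def)
  then have "M summable_on near"
    by (rule summable_on_finite)
  moreover have "(\<lambda>l. C * (1 / norm l ^ 3)) summable_on (\<Lambda> - {0})"
    using summable_on_lattice_inverse_cube by (rule summable_on_cmult_right)
  then have "(\<lambda>l. C * (1 / norm l ^ 3)) summable_on far"
    by (rule summable_on_subset_banach) (auto simp: far_def)
  then have "M summable_on far"
    by (subst summable_on_cong[where g = "\<lambda>l. C * (1 / norm l ^ 3)"]) (auto simp: M_def far_def)
  ultimately have "M summable_on (near \<union> far)"
    by (rule summable_on_Un_disjoint) (auto simp: near_def far_def)
  moreover have "near \<union> far = \<Lambda> - {0}"
    by (auto simp: near_def far_def)
  ultimately show ?thesis
    using B tail by (intro Weierstrass_m_test_general) (auto simp: M_def)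
qed

abbreviation \<zeta> :: "complex \<Rightarrow> complex" where "\<zeta> \<equiv> weierstrass_zeta \<Lambda>"

definition zeta_tail :: "complex \<Rightarrow> complex" where
  "zeta_tail w = (\<Sum>\<^sub>\<infinity>l\<in>\<Lambda>-{0}. zeta_term l w)"

definition zeta_deriv_tail :: "complex \<Rightarrow> complex" where
  "zeta_deriv_tail w = (\<Sum>\<^sub>\<infinity>l\<in>\<Lambda>-{0}. zeta_deriv_term l w)"

definition zeta_deriv2_tail :: "complex \<Rightarrow> complex" where
  "zeta_deriv2_tail w = (\<Sum>\<^sub>\<infinity>l\<in>\<Lambda>-{0}. zeta_deriv2_term l w)"

definition zeta_deriv :: "complex \<Rightarrow> complex" where
  "zeta_deriv w = - 1 / w\<^sup>2 + zeta_deriv_tail w"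

text \<open>This series converges without correction terms, so it can be summed over the whole lattice,
  which makes it periodic.\<close>

definition zeta_deriv2 :: "complex \<Rightarrow> complex" where
  "zeta_deriv2 w = (\<Sum>\<^sub>\<infinity>l\<in>\<Lambda>. zeta_deriv2_term l w)"

lemma weierstrass_zeta_eq: "\<zeta> w = 1 / w + zeta_tail w"
  unfolding weierstrass_zeta_def zeta_tail_def zeta_term_def by simp

lemma uniform_limit_zeta_tails:
  assumes off: "cball w r \<subseteq> - (\<Lambda> - {0})"
  shows "uniform_limit (cball w r) (\<lambda>X w. \<Sum>l\<in>X. zeta_term l w) zeta_tail (finite_subsets_at_top (\<Lambda> - {0}))"
    and "uniform_limit (cball w r) (\<lambda>X w. \<Sum>l\<in>X. zeta_deriv_term l w) zeta_deriv_tail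
           (finite_subsets_at_top (\<Lambda> - {0}))"
proof -
  define R where "R = norm w + r"
  have norm_le: "norm u \<le> R" if "u \<in> cball w r" for u
    using that norm_triangle_ineq2[of u w] by (auto simp: R_def dist_norm norm_minus_commute)
  have cont: "continuous_on (cball w r) (zeta_term l)" "continuous_on (cball w r) (zeta_deriv_term l)"
    if "l \<in> \<Lambda> - {0}" for l
    using off that
    by (auto intro!: continuous_at_imp_continuous_on DERIV_isCont
        has_field_derivative_zeta_term has_field_derivative_zeta_deriv_term)
  show "uniform_limit (cball w r) (\<lambda>X w. \<Sum>l\<in>X. zeta_term l w) zeta_tail (finite_subsets_at_top (\<Lambda> - {0}))"
    unfolding zeta_tail_def[abs_def]
    by (rule uniform_limit_lattice_sum[where R = "2 * R" and C = "2 * R\<^sup>2"])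
      (use cont norm_le in \<open>auto intro: norm_zeta_term_le\<close>)
  show "uniform_limit (cball w r) (\<lambda>X w. \<Sum>l\<in>X. zeta_deriv_term l w) zeta_deriv_tail
      (finite_subsets_at_top (\<Lambda> - {0}))"
    unfolding zeta_deriv_tail_def[abs_def]
    by (rule uniform_limit_lattice_sum[where R = "2 * R" and C = "12 * R"])
      (use cont norm_le in \<open>auto intro: norm_zeta_deriv_term_le\<close>)
qed

lemma has_field_derivative_zeta_tails:
  assumes "w \<notin> \<Lambda> - {0}"
  shows "(zeta_tail has_field_derivative zeta_deriv_tail w) (at w)"
    and "(zeta_deriv_tail has_field_derivative zeta_deriv2_tail w) (at w)"
    and "(\<lambda>l. zeta_deriv2_term l w) summable_on \<Lambda> - {0}"
proof -
  have "open (- (\<Lambda> - {0}))"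
    using closed_lattice_diff by (rule open_Compl)
  then obtain e where e: "e > 0" "ball w e \<subseteq> - (\<Lambda> - {0})"
    using assms open_contains_ball by blast
  define r where "r = e / 2"
  have r: "r > 0" and centre: "w \<in> ball w r"
    using e by (simp_all add: r_def)
  have "cball w r \<subseteq> ball w e"
    using e by (simp add: r_def cball_subset_ball_iff)
  with e(2) have off: "cball w r \<subseteq> - (\<Lambda> - {0})"
    by blast
  have deriv1: "(zeta_term l has_field_derivative zeta_deriv_term l u) (at u)"
    and deriv2: "(zeta_deriv_term l has_field_derivative zeta_deriv2_term l u) (at u)"
    if "l \<in> \<Lambda> - {0}" "u \<in> cball w r" for l u
    using off that by (auto intro: has_field_derivative_zeta_term has_field_derivative_zeta_deriv_term)
  note unif = uniform_limit_zeta_tails[OF off]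
  from unif(1) show "(zeta_tail has_field_derivative zeta_deriv_tail w) (at w)"
    unfolding zeta_tail_def[abs_def] zeta_deriv_tail_def
    by (intro has_field_derivative_infsum_uniform(1)[OF r centre] deriv1)
  from unif(2) show "(zeta_deriv_tail has_field_derivative zeta_deriv2_tail w) (at w)"
    unfolding zeta_deriv_tail_def[abs_def] zeta_deriv2_tail_def
    by (intro has_field_derivative_infsum_uniform(1)[OF r centre] deriv2)
  from unif(2) show "(\<lambda>l. zeta_deriv2_term l w) summable_on \<Lambda> - {0}"
    unfolding zeta_deriv_tail_def[abs_def]
    by (intro has_field_derivative_infsum_uniform(2)[OF r centre]) (auto intro: deriv2)
qed

lemma has_field_derivative_weierstrass_zeta:
  assumes "w \<notin> \<Lambda>"
  shows "(\<zeta> has_field_derivative zeta_deriv w) (at w)"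
proof -
  have "((\<lambda>w. 1 / w) has_field_derivative - 1 / w\<^sup>2) (at w)"
    using assms by (auto intro!: derivative_eq_intros simp: power2_eq_square)
  then have "((\<lambda>w. 1 / w + zeta_tail w) has_field_derivative zeta_deriv w) (at w)"
    unfolding zeta_deriv_def using assms by (intro DERIV_add has_field_derivative_zeta_tails) auto
  then show ?thesis
    by (simp add: weierstrass_zeta_eq[abs_def])
qed

lemma weierstrass_zeta_holomorphic: "\<zeta> holomorphic_on - \<Lambda>"
  using has_field_derivative_weierstrass_zeta by (subst holomorphic_on_open[OF open_lattice_compl]) auto

lemma has_field_derivative_zeta_deriv:
  assumes "w \<notin> \<Lambda>"
  shows "(zeta_deriv has_field_derivative zeta_deriv2 w) (at w)"
proof -
  have w: "w \<notin> \<Lambda> - {0}" "w \<noteq> 0"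
    using assms by auto
  have "zeta_deriv2 w = (\<Sum>\<^sub>\<infinity>l\<in>insert 0 (\<Lambda> - {0}). zeta_deriv2_term l w)"
    unfolding zeta_deriv2_def by (simp add: insert_absorb)
  also have "\<dots> = zeta_deriv2_term 0 w + zeta_deriv2_tail w"
    unfolding zeta_deriv2_tail_def by (rule infsum_insert[OF has_field_derivative_zeta_tails(3)[OF w(1)]]) simp
  finally have sum: "zeta_deriv2 w = zeta_deriv2_term 0 w + zeta_deriv2_tail w" .
  have "zeta_deriv_term 0 = (\<lambda>w. - 1 / w\<^sup>2)"
    \<comment> \<open>the correction term \<open>1 / 0\<^sup>2\<close> is \<open>0\<close> in HOL\<close>
    by (simp add: zeta_deriv_term_def fun_eq_iff)
  then have "((\<lambda>w. - 1 / w\<^sup>2) has_field_derivative zeta_deriv2_term 0 w) (at w)"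
    using has_field_derivative_zeta_deriv_term[of w 0] w by simp
  from DERIV_add[OF this has_field_derivative_zeta_tails(2)[OF w(1)]]
  show ?thesis
    unfolding zeta_deriv_def[abs_def] using sum by simp
qed

lemma zeta_deriv2_periodic:
  assumes "l \<in> \<Lambda>"
  shows "zeta_deriv2 (w + l) = zeta_deriv2 w"
proof -
  have "bij_betw (\<lambda>k. k + l) \<Lambda> \<Lambda>"
    using assms by (intro bij_betw_byWitness[where f' = "\<lambda>k. k - l"]) (auto intro: lattice_add lattice_diff)
  then have "(\<Sum>\<^sub>\<infinity>k\<in>\<Lambda>. zeta_deriv2_term (k + l) (w + l)) = zeta_deriv2 (w + l)"
    unfolding zeta_deriv2_def by (rule infsum_reindex_bij_betw)
  then show ?thesis
    unfolding zeta_deriv2_def zeta_deriv2_term_def by (simp add: algebra_simps)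
qed

lemma weierstrass_zeta_odd: "\<zeta> (- w) = - \<zeta> w"
proof -
  have "zeta_term l (- w) = - zeta_term (- l) w" for l
  proof -
    have "1 / (- w - l) = 1 / (- (w + l))"
      by simp
    also have "\<dots> = - (1 / (w + l))"
      by (rule divide_minus_right)
    finally show ?thesis
      unfolding zeta_term_def by (simp add: algebra_simps)
  qed
  then have "zeta_tail (- w) = - (\<Sum>\<^sub>\<infinity>l\<in>\<Lambda>-{0}. zeta_term (- l) w)"
    unfolding zeta_tail_def by (simp add: infsum_uminus)
  also have "bij_betw uminus (\<Lambda> - {0}) (\<Lambda> - {0})"
    by (rule bij_betw_byWitness[where f' = uminus]) auto
  then have "(\<Sum>\<^sub>\<infinity>l\<in>\<Lambda>-{0}. zeta_term (- l) w) = zeta_tail w"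
    unfolding zeta_tail_def by (rule infsum_reindex_bij_betw)
  finally show ?thesis
    by (simp add: weierstrass_zeta_eq)
qed

lemma zeta_tail_holomorphic: "zeta_tail holomorphic_on ball 0 (1 / coord_const)"
proof -
  have "ball 0 (1 / coord_const) \<subseteq> - (\<Lambda> - {0})"
    using lattice_norm_ge by (force simp: dist_norm)
  then show ?thesis
    using has_field_derivative_zeta_tails(1) by (subst holomorphic_on_open) auto
qed

subsection \<open>Odd elliptic functions with a single simple pole\<close>

lemma half_periods_not_in_lattice: "w1 / 2 \<notin> \<Lambda>" "w2 / 2 \<notin> \<Lambda>" "w2 / 2 - w1 / 2 \<notin> \<Lambda>"
proof -
  have half: "(1 / 2 :: real) \<notin> \<int>" "(- 1 / 2 :: real) \<notin> \<int>"
    using frac_gt_0_iff[of "1 / 2 :: real"] frac_gt_0_iff[of "- 1 / 2 :: real"]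
    by (simp_all add: frac_def)
  have "w1 / 2 = of_real (1 / 2) * w1 + of_real 0 * w2"
    "w2 / 2 = of_real 0 * w1 + of_real (1 / 2) * w2"
    "w2 / 2 - w1 / 2 = of_real (- 1 / 2) * w1 + of_real (1 / 2) * w2"
    by simp_all
  then show "w1 / 2 \<notin> \<Lambda>" "w2 / 2 \<notin> \<Lambda>" "w2 / 2 - w1 / 2 \<notin> \<Lambda>"
    using half by (simp_all only: mem_lattice_iff_coords coords_combination) simp_all
qed

lemma odd_periodic_zero_at_half_period:
  fixes F :: "complex \<Rightarrow> complex"
  assumes periodic: "\<And>w l. w \<notin> \<Lambda> \<Longrightarrow> l \<in> \<Lambda> \<Longrightarrow> F (w + l) = F w"
    and odd: "\<And>w. w \<notin> \<Lambda> \<Longrightarrow> F (- w) = - F w"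
    and "l \<in> \<Lambda>" "l / 2 \<notin> \<Lambda>"
  shows "F (l / 2) = 0"
proof -
  have "- (l / 2) \<notin> \<Lambda>"
    using assms(4) by simp
  from periodic[OF this assms(3)] have "F (- (l / 2) + l) = - F (l / 2)"
    using odd[OF assms(4)] by (simp only:)
  moreover have "- (l / 2) + l = l / 2"
    by simp
  ultimately show ?thesis
    by simp
qed

lemma shifted_product_tendsto:
  fixes F R :: "complex \<Rightarrow> complex"
  assumes hol: "F holomorphic_on - \<Lambda>" and "\<omega> \<notin> \<Lambda>" and R: "isCont R 0"
    and pole: "\<And>l. l \<in> \<Lambda> \<Longrightarrow> \<forall>\<^sub>F w in at l. F w = 1 / (w - l) + R (w - l)"
    and zero_plus: "\<And>l. l \<in> \<Lambda> \<Longrightarrow> F (l + \<omega>) = 0"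
    and zero_minus: "\<And>l. l \<in> \<Lambda> \<Longrightarrow> F (l - \<omega>) = 0"
  shows "\<exists>c. ((\<lambda>w. F w * F (w - \<omega>)) \<longlongrightarrow> c) (at z)"
proof -
  have deriv: "(F has_field_derivative deriv F u) (at u)" if "u \<notin> \<Lambda>" for u
    using holomorphic_derivI[OF hol open_lattice_compl] that by simp
  consider "z \<notin> \<Lambda>" "z - \<omega> \<notin> \<Lambda>" | "z \<in> \<Lambda>" | "z - \<omega> \<in> \<Lambda>"
    by blast
  then show ?thesis
  proof cases
    case 1
    have "isCont (\<lambda>w. F (w - \<omega>)) z"
      using isCont_o2[where f = "\<lambda>w. w - \<omega>" and g = F and a = z] DERIV_isCont[OF deriv[OF 1(2)]]
      by (auto intro!: continuous_intros)
    then have "isCont (\<lambda>w. F w * F (w - \<omega>)) z"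
      using DERIV_isCont[OF deriv[OF 1(1)]] by (intro continuous_intros)
    then show ?thesis
      by (auto simp: isCont_def)
  next
    case 2
    then have "z - \<omega> \<notin> \<Lambda>"
      using \<open>\<omega> \<notin> \<Lambda>\<close> lattice_diff[of z "z - \<omega>"] by auto
    then have "((\<lambda>w. F (w - \<omega>)) has_field_derivative deriv F (z - \<omega>)) (at z)"
      using deriv[of "z - \<omega>"] DERIV_shift[of F _ z "- \<omega>"] by simp
    from tendsto_mult_at_simple_pole[OF this _ R pole[OF 2]]
    show ?thesis
      using zero_minus[OF 2] by (auto simp: mult.commute)
  next
    case 3
    then have "z \<notin> \<Lambda>"
      using \<open>\<omega> \<notin> \<Lambda>\<close> lattice_diff[of z "z - \<omega>"] by auto
    have "\<forall>\<^sub>F w in at z. F (1 * w + - \<omega>) = 1 / ((1 * w + - \<omega>) - (z - \<omega>)) + R ((1 * w + - \<omega>) - (z - \<omega>))"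
      by (rule eventually_at_affine) (use pole[OF 3] in simp_all)
    then have "\<forall>\<^sub>F w in at z. F (w - \<omega>) = 1 / (w - z) + R (w - z)"
      by simp
    from tendsto_mult_at_simple_pole[OF deriv[OF \<open>z \<notin> \<Lambda>\<close>] _ R this]
    show ?thesis
      using zero_plus[OF 3] by auto
  qed
qed

lemma remove_sings_shifted_product:
  fixes F R :: "complex \<Rightarrow> complex"
  assumes hol: "F holomorphic_on - \<Lambda>" and "\<omega> \<notin> \<Lambda>" and "isCont R 0"
    and "\<And>l. l \<in> \<Lambda> \<Longrightarrow> \<forall>\<^sub>F w in at l. F w = 1 / (w - l) + R (w - l)"
    and "\<And>l. l \<in> \<Lambda> \<Longrightarrow> F (l + \<omega>) = 0" "\<And>l. l \<in> \<Lambda> \<Longrightarrow> F (l - \<omega>) = 0"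
  shows "remove_sings (\<lambda>w. F w * F (w - \<omega>)) holomorphic_on UNIV"
    and "\<And>w. w \<notin> \<Lambda> \<Longrightarrow> w - \<omega> \<notin> \<Lambda> \<Longrightarrow> remove_sings (\<lambda>w. F w * F (w - \<omega>)) w = F w * F (w - \<omega>)"
proof -
  have "F analytic_on {u}" if "u \<notin> \<Lambda>" for u
    using hol open_lattice_compl that analytic_on_open analytic_on_subset by blast
  then have analytic: "(\<lambda>w. F w * F (w - \<omega>)) analytic_on {w}" if "w \<notin> \<Lambda>" "w - \<omega> \<notin> \<Lambda>" for w
    using that by (intro analytic_intros analytic_on_compose[of "\<lambda>w. w - \<omega>" _ F, unfolded o_def]) auto
  then show "remove_sings (\<lambda>w. F w * F (w - \<omega>)) w = F w * F (w - \<omega>)"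
    if "w \<notin> \<Lambda>" "w - \<omega> \<notin> \<Lambda>" for w
    using that by simp
  show "remove_sings (\<lambda>w. F w * F (w - \<omega>)) holomorphic_on UNIV"
  proof (rule holomorphic_remove_sings_UNIV)
    have "\<forall>\<^sub>\<approx>w. w \<notin> \<Lambda> \<and> 1 * w + - \<omega> \<notin> \<Lambda>"
      using eventually_not_in_lattice eventually_cosparse_affine[OF _ eventually_not_in_lattice, of 1 "- \<omega>"]
      by (auto intro: eventually_conj)
    then have "\<forall>\<^sub>\<approx>w. (\<lambda>w. F w * F (w - \<omega>)) analytic_on {w}"
      using analytic by (auto elim!: eventually_mono)
    then show "isolated_singularity_at (\<lambda>w. F w * F (w - \<omega>)) z" for z
      by (simp add: isolated_singularity_at_altdef eventually_cosparse_imp_eventually_at)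
    show "\<exists>c. ((\<lambda>w. F w * F (w - \<omega>)) \<longlongrightarrow> c) (at z)" for z
      by (rule shifted_product_tendsto) (use assms in auto)
  qed
qed

lemma vanishes_off_lattice_if_eventually_zero:
  fixes F :: "complex \<Rightarrow> complex"
  assumes "F holomorphic_on - \<Lambda>" "\<xi> \<notin> \<Lambda>" "\<forall>\<^sub>F u in at \<xi>. F u = 0" "w \<notin> \<Lambda>"
  shows "F w = 0"
proof (rule analytic_continuation[OF assms(1) open_lattice_compl connected_lattice_compl])
  show "{u. u \<notin> \<Lambda> \<and> F u = 0} \<subseteq> - \<Lambda>"
    by auto
  have "\<forall>\<^sub>F u in at \<xi>. u \<notin> \<Lambda>"
    using eventually_not_in_lattice by (rule eventually_cosparse_imp_eventually_at) simp
  with assms(3) have "\<forall>\<^sub>F u in at \<xi>. u \<in> {u. u \<notin> \<Lambda> \<and> F u = 0}"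
    by eventually_elim auto
  then show "\<xi> islimpt {u. u \<notin> \<Lambda> \<and> F u = 0}"
    unfolding islimpt_iff_eventually
  proof (intro notI)
    assume "\<forall>\<^sub>F u in at \<xi>. u \<notin> {u. u \<notin> \<Lambda> \<and> F u = 0}"
    with \<open>\<forall>\<^sub>F u in at \<xi>. u \<in> {u. u \<notin> \<Lambda> \<and> F u = 0}\<close> have "\<forall>\<^sub>F u in at \<xi>. False"
      by eventually_elim auto
    then show False
      by (simp add: eventually_False)
  qed
qed (use assms in auto)

lemma simple_pole_at_lattice_points:
  fixes F R :: "complex \<Rightarrow> complex"
  assumes periodic: "\<And>w l. w \<notin> \<Lambda> \<Longrightarrow> l \<in> \<Lambda> \<Longrightarrow> F (w + l) = F w"
    and pole: "\<forall>\<^sub>F w in at 0. F w = 1 / w + R w" and "l \<in> \<Lambda>"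
  shows "\<forall>\<^sub>F w in at l. F w = 1 / (w - l) + R (w - l)"
proof -
  have "\<forall>\<^sub>F w in at (1 * l + - l). F w = 1 / w + R w"
    using pole by simp
  from eventually_at_affine[OF _ this]
  have "\<forall>\<^sub>F w in at l. F (w - l) = 1 / (w - l) + R (w - l)"
    by simp
  moreover have "\<forall>\<^sub>F w in at l. w \<notin> \<Lambda>"
    using eventually_not_in_lattice by (rule eventually_cosparse_imp_eventually_at) simp
  ultimately show ?thesis
    by eventually_elim (use periodic[of _ "- l"] \<open>l \<in> \<Lambda>\<close> in simp)
qed

lemma no_odd_elliptic_with_single_simple_pole:
  fixes F R :: "complex \<Rightarrow> complex" and \<rho> :: real
  assumes hol: "F holomorphic_on - \<Lambda>"
    and periodic: "\<And>w l. w \<notin> \<Lambda> \<Longrightarrow> l \<in> \<Lambda> \<Longrightarrow> F (w + l) = F w"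
    and odd: "\<And>w. w \<notin> \<Lambda> \<Longrightarrow> F (- w) = - F w"
    and R: "R holomorphic_on ball 0 \<rho>" "\<rho> > 0"
    and pole: "\<And>w. w \<in> ball 0 \<rho> \<Longrightarrow> w \<noteq> 0 \<Longrightarrow> F w = 1 / w + R w"
  shows False
proof -
  define \<omega> where "\<omega> = w1 / 2"
  have \<omega>: "\<omega> \<notin> \<Lambda>" "- \<omega> \<notin> \<Lambda>" "w2 / 2 - \<omega> \<notin> \<Lambda>"
    using half_periods_not_in_lattice by (simp_all add: \<omega>_def)
  have "isCont R 0"
    using R by (meson centre_in_ball continuous_on_eq_continuous_at holomorphic_on_imp_continuous_on open_ball)
  have pole_0: "\<forall>\<^sub>F w in at 0. F w = 1 / w + R w"
    using eventually_at_in_open[of "ball 0 \<rho>" 0] R(2) by (auto elim!: eventually_mono simp: pole)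
  have "F \<omega> = 0" "F (- \<omega>) = 0"
    using odd_periodic_zero_at_half_period[OF periodic odd, of w1] half_periods_not_in_lattice(1) odd[OF \<omega>(1)]
    by (simp_all add: \<omega>_def)
  then have zeros: "F (l + \<omega>) = 0" "F (l - \<omega>) = 0" if "l \<in> \<Lambda>" for l
    using periodic[of \<omega> l] periodic[of "- \<omega>" l] \<omega> that by (simp_all add: add.commute)
  define G where "G = remove_sings (\<lambda>w. F w * F (w - \<omega>))"
  have G_holo: "G holomorphic_on UNIV"
    and G_eq: "\<And>w. w \<notin> \<Lambda> \<Longrightarrow> w - \<omega> \<notin> \<Lambda> \<Longrightarrow> G w = F w * F (w - \<omega>)"
    using remove_sings_shifted_product[OF hol \<omega>(1) \<open>isCont R 0\<close>
        simple_pole_at_lattice_points[OF periodic pole_0] zeros]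
    unfolding G_def by auto
  have good: "\<forall>\<^sub>\<approx>w. w \<notin> \<Lambda> \<and> w - \<omega> \<notin> \<Lambda>"
    using eventually_not_in_lattice eventually_cosparse_affine[OF _ eventually_not_in_lattice, of 1 "- \<omega>"]
    by (auto intro: eventually_conj)
  have "\<forall>\<^sub>\<approx>w. G (w + l) = G w" if "l \<in> \<Lambda>" for l
    using good
  proof eventually_elim
    case (elim w)
    have "w + l \<notin> \<Lambda>" "(w - \<omega>) + l \<notin> \<Lambda>" and shift: "w + l - \<omega> = (w - \<omega>) + l"
      using elim that by simp_all
    then show ?case
      using G_eq[of "w + l"] G_eq[of w] periodic[of w l] periodic[of "w - \<omega>" l] elim that
      unfolding shift by simp
  qed
  with G_holo obtain C where C: "\<And>w. G w = C"
    using entire_eventually_periodic_imp_constant by blast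
  have "C = 0"
    using C[of "w2 / 2"] G_eq[of "w2 / 2"] \<omega>(3) half_periods_not_in_lattice(2)
      odd_periodic_zero_at_half_period[OF periodic odd, of w2] by simp
  from good have "\<forall>\<^sub>\<approx>w. F w * F (w - \<omega>) = 0"
    by eventually_elim (use G_eq C \<open>C = 0\<close> in simp)
  moreover have nonzero: "\<forall>\<^sub>F w in at 0. F w \<noteq> 0"
    using eventually_nonzero_at_simple_pole[where z = 0 and R = R and F = F] pole_0 \<open>isCont R 0\<close> by simp
  ultimately have "\<forall>\<^sub>F u in at (0 - \<omega>). F u = 0"
    by (rule eventually_zero_if_shifted_product_zero)
  then have "F w = 0" if "w \<notin> \<Lambda>" for w
    using vanishes_off_lattice_if_eventually_zero[OF hol \<omega>(2) _ that] by simp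
  moreover obtain w where "F w \<noteq> 0" "w \<notin> \<Lambda>"
    using eventually_happens'[OF at_neq_bot eventually_conj[OF nonzero
        eventually_cosparse_imp_eventually_at[OF eventually_not_in_lattice, of 0 UNIV]]] by blast
  ultimately show False
    by simp
qed

subsection \<open>Multiples of \<open>\<zeta>\<close> modulo entire and elliptic functions\<close>

lemma periodic_off_lattice_if_deriv_periodic:
  fixes \<psi> \<psi>' :: "complex \<Rightarrow> complex" and N :: nat
  assumes deriv: "\<And>w. w \<notin> \<Lambda> \<Longrightarrow> (\<psi> has_field_derivative \<psi>' w) (at w)"
    and deriv_periodic: "\<And>w l. w \<notin> \<Lambda> \<Longrightarrow> l \<in> \<Lambda> \<Longrightarrow> \<psi>' (w + l) = \<psi>' w"
    and multiple: "\<And>w l. w \<notin> \<Lambda> \<Longrightarrow> l \<in> \<Lambda> \<Longrightarrow> \<psi> (w + of_nat N * l) = \<psi> w"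
    and N: "N > 0" and w: "w \<notin> \<Lambda>" and l: "l \<in> \<Lambda>"
  shows "\<psi> (w + l) = \<psi> w"
proof -
  define D where "D w = \<psi> (w + l) - \<psi> w" for w
  have "(D has_field_derivative 0) (at w)" if "w \<in> - \<Lambda>" for w
  proof -
    have "((\<lambda>w. \<psi> (w + l)) has_field_derivative \<psi>' (w + l)) (at w)"
      using deriv[of "w + l"] that l by (simp add: DERIV_shift)
    then have "(D has_field_derivative \<psi>' (w + l) - \<psi>' w) (at w)"
      unfolding D_def[abs_def] using deriv that by (intro DERIV_diff) auto
    then show ?thesis
      using deriv_periodic that l by simp
  qed
  moreover from this have "continuous_on (- \<Lambda>) D"
    by (intro continuous_at_imp_continuous_on) (blast intro: DERIV_isCont)
  ultimately obtain \<delta> where \<delta>: "\<And>w. w \<in> - \<Lambda> \<Longrightarrow> D w = \<delta>"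
    using DERIV_zero_connected_constant[OF connected_lattice_compl open_lattice_compl finite.emptyI] by blast
  have "\<psi> (w + of_nat k * l) - \<psi> w = of_nat k * \<delta>" for k
  proof (induction k)
    case (Suc k)
    have "w + of_nat k * l \<notin> \<Lambda>"
      using w l lattice_of_nat_mult[of l k] by simp
    then have "D (w + of_nat k * l) = \<delta>"
      using \<delta> by simp
    then have "\<psi> (w + of_nat (Suc k) * l) - \<psi> (w + of_nat k * l) = \<delta>"
      unfolding D_def by (simp add: algebra_simps)
    then show ?case
      using Suc by (simp add: algebra_simps)
  qed simp
  from this[of N] have "of_nat N * \<delta> = 0"
    using multiple[OF w l] by simp
  then have "\<delta> = 0"
    using N by simp
  then show ?thesis
    using \<delta>[of w] w unfolding D_def by simp
qed

lemma periodic_if_multiple_periodic: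
  fixes \<Phi> \<Phi>' \<Phi>'' :: "complex \<Rightarrow> complex" and N :: nat
  assumes N: "N > 0"
    and deriv: "\<And>w. w \<notin> \<Lambda> \<Longrightarrow> (\<Phi> has_field_derivative \<Phi>' w) (at w)"
    and deriv2: "\<And>w. w \<notin> \<Lambda> \<Longrightarrow> (\<Phi>' has_field_derivative \<Phi>'' w) (at w)"
    and deriv2_periodic: "\<And>w l. w \<notin> \<Lambda> \<Longrightarrow> l \<in> \<Lambda> \<Longrightarrow> \<Phi>'' (w + l) = \<Phi>'' w"
    and multiple: "\<And>w l. w \<notin> \<Lambda> \<Longrightarrow> l \<in> \<Lambda> \<Longrightarrow> \<Phi> (w + of_nat N * l) = \<Phi> w"
    and "w \<notin> \<Lambda>" "l \<in> \<Lambda>"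
  shows "\<Phi> (w + l) = \<Phi> w"
proof -
  have multiple': "\<Phi>' (w + of_nat N * l) = \<Phi>' w" if "w \<notin> \<Lambda>" "l \<in> \<Lambda>" for w l
  proof -
    have Nl: "of_nat N * l \<in> \<Lambda>"
      using that(2) by (rule lattice_of_nat_mult)
    have "((\<lambda>u. \<Phi> (u + of_nat N * l)) has_field_derivative \<Phi>' (w + of_nat N * l)) (at w)"
      using deriv[of "w + of_nat N * l"] that Nl by (simp add: DERIV_shift)
    then have "(\<Phi> has_field_derivative \<Phi>' (w + of_nat N * l)) (at w)"
      by (rule has_field_derivative_transform_within_open[OF _ open_lattice_compl])
        (use that multiple Nl in auto)
    then show ?thesis
      using deriv[OF that(1)] by (rule DERIV_unique)
  qed
  have "\<Phi>' (w + l) = \<Phi>' w" if "w \<notin> \<Lambda>" "l \<in> \<Lambda>" for w l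
    using deriv2 deriv2_periodic multiple' N that by (rule periodic_off_lattice_if_deriv_periodic)
  with deriv show ?thesis
    using multiple N assms(6,7) by (rule periodic_off_lattice_if_deriv_periodic)
qed

lemma weierstrass_zeta_minus_entire_not_periodic:
  assumes e: "e holomorphic_on UNIV"
    and periodic: "\<And>w l. w \<notin> \<Lambda> \<Longrightarrow> l \<in> \<Lambda> \<Longrightarrow> \<zeta> (w + l) - e (w + l) = \<zeta> w - e w"
  shows False
proof -
  define \<rho> where "\<rho> w = e w + e (- w)" for w
  have \<rho>_holo: "\<rho> holomorphic_on UNIV"
    unfolding \<rho>_def[abs_def] using e
    by (intro holomorphic_intros holomorphic_on_compose_gen[of uminus UNIV e UNIV, unfolded o_def]) auto
  have \<rho>_eq: "\<rho> w = - ((\<zeta> w - e w) + (\<zeta> (- w) - e (- w)))" for w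
    unfolding \<rho>_def using weierstrass_zeta_odd[of w] by simp
  have "\<forall>\<^sub>\<approx>w. \<rho> (w + l) = \<rho> w" if "l \<in> \<Lambda>" for l
    using eventually_not_in_lattice
  proof eventually_elim
    case (elim w)
    have "- (w + l) = - w + - l"
      by simp
    then show ?case
      unfolding \<rho>_eq using periodic[OF elim that] periodic[of "- w" "- l"] elim that by simp
  qed
  with \<rho>_holo obtain \<kappa> where \<kappa>: "\<And>w. \<rho> w = \<kappa>"
    using entire_eventually_periodic_imp_constant by blast
  define F where "F w = \<zeta> w - e w + \<kappa> / 2" for w
  show False
  proof (rule no_odd_elliptic_with_single_simple_pole)
    show "F holomorphic_on - \<Lambda>"
      unfolding F_def[abs_def] using weierstrass_zeta_holomorphic holomorphic_on_subset[OF e]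
      by (intro holomorphic_intros) auto
    show "F (w + l) = F w" if "w \<notin> \<Lambda>" "l \<in> \<Lambda>" for w l
      unfolding F_def using periodic[OF that] by simp
    show "F (- w) = - F w" if "w \<notin> \<Lambda>" for w
      unfolding F_def using \<rho>_eq[of w] \<kappa>[of w] by (simp add: algebra_simps)
    show "(\<lambda>w. zeta_tail w - e w + \<kappa> / 2) holomorphic_on ball 0 (1 / coord_const)"
      using zeta_tail_holomorphic holomorphic_on_subset[OF e] by (intro holomorphic_intros) auto
    show "F w = 1 / w + (zeta_tail w - e w + \<kappa> / 2)" for w
      unfolding F_def weierstrass_zeta_eq by simp
  qed (use coord_const_pos in simp)
qed

lemma eventually_deriv2_eq_plus_zeta:
  fixes E h :: "complex \<Rightarrow> complex"
  assumes "\<forall>\<^sub>\<approx>w. h analytic_on {w}" and "\<forall>\<^sub>\<approx>w. E w = h w + \<zeta> w"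
  shows "\<forall>\<^sub>\<approx>w. deriv (deriv E) w = deriv (deriv h) w + zeta_deriv2 w"
proof -
  define G where "G = {w. h analytic_on {w} \<and> w \<notin> \<Lambda> \<and> E w = h w + \<zeta> w}"
  have "\<forall>\<^sub>\<approx>w. h analytic_on {w} \<and> w \<notin> \<Lambda> \<and> E w = h w + \<zeta> w"
    by (intro eventually_conj assms eventually_not_in_lattice)
  then have G_ev: "\<forall>\<^sub>\<approx>w. w \<in> G"
    by (simp add: G_def)
  have G: "open G"
    using open_Collect_if_cosparse[OF G_ev] by simp
  have "h analytic_on G"
    by (rule analytic_on_analytic_at[THEN iffD2]) (simp add: G_def)
  then have h: "h holomorphic_on G" and h': "deriv h holomorphic_on G"
    using G by (auto intro: analytic_imp_holomorphic holomorphic_deriv)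
  have deriv_E: "deriv E w = deriv h w + zeta_deriv w" if "w \<in> G" for w
  proof -
    have "((\<lambda>w. h w + \<zeta> w) has_field_derivative deriv h w + zeta_deriv w) (at w)"
      using that by (auto intro!: DERIV_add holomorphic_derivI[OF h G] has_field_derivative_weierstrass_zeta
          simp: G_def)
    then have "(E has_field_derivative deriv h w + zeta_deriv w) (at w)"
      by (rule has_field_derivative_transform_within_open[OF _ G that]) (simp add: G_def)
    then show ?thesis
      by (rule DERIV_imp_deriv)
  qed
  have "deriv (deriv E) w = deriv (deriv h) w + zeta_deriv2 w" if "w \<in> G" for w
  proof -
    have "((\<lambda>w. deriv h w + zeta_deriv w) has_field_derivative deriv (deriv h) w + zeta_deriv2 w) (at w)"
      using that by (auto intro!: DERIV_add holomorphic_derivI[OF h' G] has_field_derivative_zeta_deriv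
          simp: G_def)
    then have "(deriv E has_field_derivative deriv (deriv h) w + zeta_deriv2 w) (at w)"
      by (rule has_field_derivative_transform_within_open[OF _ G that]) (simp add: deriv_E)
    then show ?thesis
      by (rule DERIV_imp_deriv)
  qed
  with G_ev show ?thesis
    by (auto elim!: eventually_mono)
qed

lemma entire_ne_multiple_periodic_plus_zeta:
  fixes E h :: "complex \<Rightarrow> complex" and N :: nat
  assumes N: "N > 0" and E: "E holomorphic_on UNIV"
    and h_periodic: "\<And>w l. l \<in> \<Lambda> \<Longrightarrow> h (w + of_nat N * l) = h w"
    and h_analytic: "\<forall>\<^sub>\<approx>w. h analytic_on {w}"
    and eq: "\<forall>\<^sub>\<approx>w. E w = h w + \<zeta> w"
  shows False
proof -
  have shifted: "\<forall>\<^sub>\<approx>w. P w \<and> P (w + of_nat N * l)" if "\<forall>\<^sub>\<approx>w. P w" for P :: "complex \<Rightarrow> bool" and l :: complex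
    using that eventually_cosparse_affine[where a = 1 and b = "of_nat N * l", OF _ that]
    by (simp add: eventually_conj)
  have E2: "\<forall>\<^sub>\<approx>w. deriv (deriv E) w = deriv (deriv h) w + zeta_deriv2 w"
    using h_analytic eq by (rule eventually_deriv2_eq_plus_zeta)
  have "\<forall>\<^sub>\<approx>w. deriv (deriv E) (w + of_nat N * l) = deriv (deriv E) w" if l: "l \<in> \<Lambda>" for l
    using shifted[where l = l, OF E2]
  proof eventually_elim
    case (elim w)
    have "deriv (deriv h) (w + of_nat N * l) = deriv (deriv h) w"
      using h_periodic[OF l] by (intro deriv_periodic) auto
    moreover have "zeta_deriv2 (w + of_nat N * l) = zeta_deriv2 w"
      using lattice_of_nat_mult[OF l] by (rule zeta_deriv2_periodic)
    ultimately show ?case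
      using elim by simp
  qed
  then obtain k where k: "\<And>w. deriv (deriv E) w = k"
    using entire_multiple_periodic_imp_constant[OF holomorphic_deriv[OF holomorphic_deriv[OF E]] N] by auto
  have deriv_E: "(E has_field_derivative deriv E w) (at w)" "(deriv E has_field_derivative k) (at w)" for w
    using holomorphic_derivI[OF E open_UNIV UNIV_I]
      holomorphic_derivI[OF holomorphic_deriv[OF E open_UNIV] open_UNIV UNIV_I] k by simp_all
  have "\<zeta> (w + l) - E (w + l) = \<zeta> w - E w" if "w \<notin> \<Lambda>" "l \<in> \<Lambda>" for w l
  proof (rule periodic_if_multiple_periodic[OF N _ _ _ _ that])
    show "((\<lambda>w. \<zeta> w - E w) has_field_derivative zeta_deriv w - deriv E w) (at w)" if "w \<notin> \<Lambda>" for w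
      using that by (intro DERIV_diff has_field_derivative_weierstrass_zeta deriv_E)
    show "((\<lambda>w. zeta_deriv w - deriv E w) has_field_derivative zeta_deriv2 w - k) (at w)" if "w \<notin> \<Lambda>" for w
      using that by (intro DERIV_diff has_field_derivative_zeta_deriv deriv_E)
    show "zeta_deriv2 (w + l) - k = zeta_deriv2 w - k" if "l \<in> \<Lambda>" for w l
      using zeta_deriv2_periodic[OF that] by simp
    show "\<zeta> (w + of_nat N * l) - E (w + of_nat N * l) = \<zeta> w - E w" if "w \<notin> \<Lambda>" "l \<in> \<Lambda>" for w l
    proof (rule periodic_off_lattice_if_eventually_cosparse[where f = "\<lambda>w. \<zeta> w - E w"])
      show "continuous_on (- \<Lambda>) (\<lambda>w. \<zeta> w - E w)"
        using weierstrass_zeta_holomorphic holomorphic_on_subset[OF E]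
        by (intro holomorphic_on_imp_continuous_on holomorphic_intros) auto
      show "\<forall>\<^sub>\<approx>w. \<zeta> (w + of_nat N * l) - E (w + of_nat N * l) = \<zeta> w - E w"
        using shifted[where l = l, OF eq] by eventually_elim (simp add: h_periodic[OF that(2)])
    qed (use that lattice_of_nat_mult in auto)
  qed
  with E show False
    by (rule weierstrass_zeta_minus_entire_not_periodic)
qed

lemma zeta_coefficient_eq_0:
  fixes E h :: "complex \<Rightarrow> complex" and c z0 :: complex and N :: nat
  assumes N: "N > 0" and E: "E holomorphic_on UNIV"
    and h_periodic: "\<And>z l. l \<in> \<Lambda> \<Longrightarrow> h (z + l) = h z"
    and h_analytic: "\<forall>\<^sub>\<approx>z. h analytic_on {z}"
    and eq: "\<forall>\<^sub>\<approx>z. E z = h z + c * \<zeta> (of_nat N * z - z0)"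
  shows "c = 0"
proof (rule ccontr)
  assume "c \<noteq> 0"
  define a where "a = 1 / (of_nat N :: complex)"
  have a: "a \<noteq> 0" "of_nat N * (a * w + a * z0) - z0 = w" for w
    using N by (simp_all add: a_def field_simps)
  show False
  proof (rule entire_ne_multiple_periodic_plus_zeta[OF N])
    have "E \<circ> (\<lambda>w. a * w + a * z0) holomorphic_on UNIV"
      by (rule holomorphic_on_compose_gen[OF _ E]) (auto intro: holomorphic_intros)
    then show "(\<lambda>w. E (a * w + a * z0) / c) holomorphic_on UNIV"
      using holomorphic_on_divide[OF _ holomorphic_on_const, of _ UNIV c] \<open>c \<noteq> 0\<close> by (simp add: o_def)
    show "h (a * (w + of_nat N * l) + a * z0) / c = h (a * w + a * z0) / c" if "l \<in> \<Lambda>" for w l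
      using h_periodic[OF that, of "a * w + a * z0"] N by (simp add: a_def field_simps)
    have "\<forall>\<^sub>\<approx>w. h analytic_on {a * w + a * z0}"
      using eventually_cosparse_affine[OF a(1) h_analytic] .
    then show "\<forall>\<^sub>\<approx>w. (\<lambda>w. h (a * w + a * z0) / c) analytic_on {w}"
    proof eventually_elim
      case (elim w)
      have "(\<lambda>w. a * w + a * z0) analytic_on {w}"
        by (intro analytic_intros)
      from analytic_on_compose[OF this] elim have "h \<circ> (\<lambda>w. a * w + a * z0) analytic_on {w}"
        by simp
      then show ?case
        using \<open>c \<noteq> 0\<close> by (simp add: o_def analytic_on_divide)
    qed
    show "\<forall>\<^sub>\<approx>w. E (a * w + a * z0) / c = h (a * w + a * z0) / c + \<zeta> w"
      using eventually_cosparse_affine[OF a(1) eq, of "a * z0"]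
      by eventually_elim (use \<open>c \<noteq> 0\<close> a(2) in \<open>simp add: field_simps\<close>)
  qed
qed

lemma entire_eq_elliptic_imp_constant:
  assumes a: "elliptic_fun \<Lambda> a" and t: "t holomorphic_on UNIV" and eq: "\<forall>\<^sub>\<approx>z. t z = a z"
  obtains c where "\<And>z. t z = c" "\<And>z. a z = c"
proof -
  have a_periodic: "a (z + l) = a z" if "l \<in> \<Lambda>" for z l
    using a that unfolding elliptic_fun_def by blast
  have "\<forall>\<^sub>\<approx>z. t (z + l) = t z" if "l \<in> \<Lambda>" for l
  proof -
    have "\<forall>\<^sub>\<approx>z. t (1 * z + l) = a (1 * z + l)"
      using eq by (rule eventually_cosparse_affine[rotated]) simp
    with eq show ?thesis
      by eventually_elim (simp add: a_periodic that)
  qed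
  with t obtain c where c: "\<And>z. t z = c"
    using entire_eventually_periodic_imp_constant by blast
  have "a z = c" for z
  proof -
    have "\<forall>\<^sub>F w in at z. t w = a w"
      by (rule eventually_cosparse_imp_eventually_at[OF eq]) simp
    then have "\<forall>\<^sub>F w in at z. a w = c"
      by eventually_elim (simp add: c)
    then have lim: "(a \<longlongrightarrow> c) (at z)"
      by (rule tendsto_eventually)
    have "a nicely_meromorphic_on UNIV"
      using a unfolding elliptic_fun_def by blast
    then have "is_pole a z \<and> a z = 0 \<or> (a \<longlongrightarrow> a z) (at z)"
      unfolding nicely_meromorphic_on_def by blast
    then show ?thesis
      using lim not_tendsto_and_filterlim_at_infinity[OF at_neq_bot lim] tendsto_unique[OF at_neq_bot lim]
      unfolding is_pole_def by blast
  qed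
  with c show ?thesis
    using that by blast
qed

lemma last_row_constant:
  fixes a t :: "nat \<Rightarrow> complex \<Rightarrow> complex" and N r :: nat and z0 :: complex
  assumes N: "N > 0" and r: "r > 0"
    and a: "\<And>l. l < r \<Longrightarrow> elliptic_fun \<Lambda> (a l)"
    and t: "\<And>j. j < r \<Longrightarrow> t j holomorphic_on UNIV"
    and row: "\<And>j. j < r \<Longrightarrow>
      \<forall>\<^sub>\<approx>z. t j z = (\<Sum>l\<le>j. a l z * \<zeta> (of_nat N * z - z0) ^ (j - l) / fact (j - l))"
  shows "\<And>l z. l < r - 1 \<Longrightarrow> a l z = 0 \<and> t l z = 0"
    and "\<exists>k. \<forall>z. t (r - 1) z = k \<and> a (r - 1) z = k"
proof -
  have diagonal: "\<forall>\<^sub>\<approx>z. t j z = a j z" if j: "j < r" and lower: "\<And>l z. l < j \<Longrightarrow> a l z = 0" for j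
    using row[OF j] by eventually_elim (simp add: sum_lower_terms_vanish(1) lower)
  have vanish: "\<forall>l<j. \<forall>z. a l z = 0 \<and> t l z = 0" if "j \<le> r - 1" for j
    using that
  proof (induction j)
    case (Suc j)
    then have j: "j < r" "Suc j < r" and lower: "\<And>l z. l < j \<Longrightarrow> a l z = 0 \<and> t l z = 0"
      by simp_all
    obtain c where c: "\<And>z. t j z = c" "\<And>z. a j z = c"
      using entire_eq_elliptic_imp_constant[OF a[OF j(1)] t[OF j(1)] diagonal[OF j(1)]] lower by metis
    have eq: "\<forall>\<^sub>\<approx>z. t (Suc j) z = a (Suc j) z + c * \<zeta> (of_nat N * z - z0)"
      using row[OF j(2)]
    proof eventually_elim
      case (elim z)
      then show ?case
        by (subst (asm) sum_lower_terms_vanish(2)) (simp_all add: lower c)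
    qed
    have "c = 0"
    proof (rule zeta_coefficient_eq_0[OF N t[OF j(2)] _ _ eq])
      show "a (Suc j) (z + l) = a (Suc j) z" if "l \<in> \<Lambda>" for z l
        using a[OF j(2)] that unfolding elliptic_fun_def by blast
      have "a (Suc j) meromorphic_on UNIV"
        using a[OF j(2)] unfolding elliptic_fun_def nicely_meromorphic_on_def by blast
      then show "\<forall>\<^sub>\<approx>z. a (Suc j) analytic_on {z}"
        by (rule meromorphic_on_imp_analytic_cosparse)
    qed
    then show ?case
      using lower c by (auto simp: less_Suc_eq)
  qed simp
  then show "\<And>l z. l < r - 1 \<Longrightarrow> a l z = 0 \<and> t l z = 0"
    by blast
  have "r - 1 < r"
    using r by simp
  with vanish[of "r - 1"] obtain k where "\<And>z. t (r - 1) z = k" "\<And>z. a (r - 1) z = k"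
    using entire_eq_elliptic_imp_constant[OF a t diagonal] by blast
  then show "\<exists>k. \<forall>z. t (r - 1) z = k \<and> a (r - 1) z = k"
    by blast
qed

end

theorem lemma5p7:
  fixes w1 w2 z0 :: complex and p q r :: nat
    and A T :: "complex \<Rightarrow> complex mat"
  defines "L \<equiv> lattice w1 w2"
  defines "U \<equiv> (\<lambda>z. exp_nilp (weierstrass_zeta L (of_nat (p * q) * z - z0) \<cdot>\<^sub>m Nmat r))"
  assumes basis: "is_lattice_basis w1 w2"
    and pq: "p \<ge> 2" "q \<ge> 2" and r: "r \<ge> 2"
    and A_dim: "\<And>z. A z \<in> carrier_mat r r"
    and A_ell: "\<And>i j. i < r \<Longrightarrow> j < r \<Longrightarrow> elliptic_fun L (\<lambda>z. A z $$ (i,j))"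
    and A_GL: "\<exists>z. (\<forall>i<r. \<forall>j<r. (\<lambda>x. A x $$ (i,j)) analytic_on {z}) \<and> det (A z) \<noteq> 0"
    and T_dim: "\<And>z. T z \<in> carrier_mat r r"
    and T_entire: "\<And>i j. i < r \<Longrightarrow> j < r \<Longrightarrow> (\<lambda>z. T z $$ (i,j)) holomorphic_on UNIV"
    and T_inv: "\<exists>S. (\<forall>z. S z \<in> carrier_mat r r)
                  \<and> (\<forall>i<r. \<forall>j<r. (\<lambda>z. S z $$ (i,j)) holomorphic_on UNIV)
                  \<and> (\<forall>z. T z * S z = 1\<^sub>m r \<and> S z * T z = 1\<^sub>m r)"
    and eqn: "\<And>z. of_nat (p * q) * z - z0 \<notin> L \<Longrightarrow> of_nat (p * q) * (z / of_nat p) - z0 \<notin> L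
               \<Longrightarrow> (\<forall>i<r. \<forall>j<r. (\<lambda>x. A x $$ (i,j)) analytic_on {z})
               \<Longrightarrow> U (z / of_nat p) * T z = A z * U z"
  shows "(\<forall>z. (case split_block (T z) (r - 1) (r - 1) of (T', \<beta>, \<gamma>, \<delta>) \<Rightarrow> \<gamma> = 0\<^sub>m 1 (r - 1))
            \<and> (case split_block (A z) (r - 1) (r - 1) of (A', b, c, d) \<Rightarrow> c = 0\<^sub>m 1 (r - 1))) \<and>
         (\<exists>k::complex. \<forall>z.
            (case split_block (T z) (r - 1) (r - 1) of (T', \<beta>, \<gamma>, \<delta>) \<Rightarrow> \<delta> = mat 1 1 (\<lambda>_. k))
          \<and> (case split_block (A z) (r - 1) (r - 1) of (A', b, c, d) \<Rightarrow> d = mat 1 1 (\<lambda>_. k)))"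
proof -
  \<comment> \<open>Only last rows are compared.\<close>
  interpret complex_lattice w1 w2
    using basis by unfold_locales
  have "r > 0" "p > 0" "p * q > 0"
    using r pq by simp_all
  have "\<forall>\<^sub>\<approx>z. of_nat (p * q) * z + - z0 \<notin> \<Lambda> \<and> of_nat q * z + - z0 \<notin> \<Lambda>"
    using pq by (intro eventually_conj eventually_cosparse_affine eventually_not_in_lattice) simp_all
  moreover have "\<forall>\<^sub>\<approx>z. \<forall>i\<in>{..<r}. \<forall>j\<in>{..<r}. (\<lambda>x. A x $$ (i, j)) analytic_on {z}"
    using A_ell by (intro eventually_ball_finite ballI meromorphic_on_imp_analytic_cosparse)
      (auto simp: L_def elliptic_fun_def nicely_meromorphic_on_def)
  ultimately have "\<forall>\<^sub>\<approx>z. U (z / of_nat p) * T z = A z * U z"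
    by eventually_elim (use \<open>p > 0\<close> in \<open>auto simp: L_def intro!: eqn\<close>)
  then have "\<forall>\<^sub>\<approx>z. T z $$ (r - 1, j) =
      (\<Sum>l\<le>j. A z $$ (r - 1, l) * \<zeta> (of_nat (p * q) * z - z0) ^ (j - l) / fact (j - l))" if "j < r" for j
  proof eventually_elim
    case (elim z)
    then show ?case
      unfolding U_def L_def by (rule last_row_conjugation[OF T_dim A_dim that])
  qed
  from last_row_constant[where a = "\<lambda>l z. A z $$ (r - 1, l)" and t = "\<lambda>j z. T z $$ (r - 1, j)",
      OF \<open>p * q > 0\<close> \<open>r > 0\<close> _ _ this]
  have "\<And>l z. l < r - 1 \<Longrightarrow> A z $$ (r - 1, l) = 0 \<and> T z $$ (r - 1, l) = 0"
    and "\<exists>k. \<forall>z. T z $$ (r - 1, r - 1) = k \<and> A z $$ (r - 1, r - 1) = k"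
    using A_ell T_entire \<open>r > 0\<close> by (simp_all add: L_def)
  then show ?thesis
    unfolding split_block_last_row[OF A_dim \<open>r > 0\<close>] split_block_last_row[OF T_dim \<open>r > 0\<close>]
    by (auto intro!: eq_matI)
qed

end
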